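(* Let $U=\mathbb R$ and let $f^l,f^r:\mathbb R\to\mathbb R$ be such that, for some $u_o^l,u_o^r\in\mathbb R$, $f^{l,r}$ restricted to $(-\infty,u_o^{l,r}]$ is a bijective decreasing map onto $\mathbb R_+=[0,\infty)$ and $f^{l,r}$ restricted to $[u_o^{l,r},\infty)$ is a bijective increasing map onto $\mathbb R_+$. Let $\mathcal G_{AP}$ be the set of pairs $(u^l,u^r)\in\mathbb R^2$ with $f^l(u^l)=f^r(u^r)$ and $\operatorname{sign}(u^l-u_o^l)=\operatorname{sign}(u^r-u_o^r)$. Then $\mathcal G_{AP}$ is complete.
   Context: Completeness: $u_-$ connects to $u^l$ from the left if there is a Kruzhkov entropy solution $w$ of $w_t+f^l(w)_x=0$ on $(0,\infty)\times\mathbb R$ with initial data $u_-$ ($x<0$), $u^l$ ($x>0$) and $w=u^l$ a.e. on $\{x>0\}$; $u^r$ connects to $u_+$ from the right if there is a Kruzhkov entropy solution $w$ of $w_t+f^r(w)_x=0$ with data $u^r$ ($x<0$), $u_+$ ($x>0$) and $w=u^r$ a.e. on $\{x<0\}$. A set $\mathcal G$ of pairs is complete if for every $(u_-,u_+)\in\mathbb R^2$ there is $(u^l,u^r)\in\mathcal G$ such that $u_-$ connects to $u^l$ from the left and $u^r$ connects to $u_+$ from the right. *)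

theory Defs
  imports "HOL-Analysis.Analysis"
begin

text \<open>Nonnegative C^1 test functions with compact support on the (t,x)-plane.
  The pair p = (t,x); phit, phix are the partial derivatives in t and x.\<close>
definition test_fun ::
  "(real \<times> real \<Rightarrow> real) \<Rightarrow> (real \<times> real \<Rightarrow> real) \<Rightarrow> (real \<times> real \<Rightarrow> real) \<Rightarrow> bool" where
  "test_fun phi phit phix \<longleftrightarrow>
     (\<forall>p. phi p \<ge> 0) \<and>
     (\<exists>K. compact K \<and> (\<forall>p. p \<notin> K \<longrightarrow> phi p = 0)) \<and>
     (\<forall>p. (phi has_derivative (\<lambda>(s, y). s * phit p + y * phix p)) (at p)) \<and>
     continuous_on UNIV phit \<and> continuous_on UNIV phix"

text \<open>Kruzhkov entropy solution w(t,x) of w_t + f(w)_x = 0 on (0,\<infinity>) \<times> R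
  with initial data w0.\<close>
definition kruzhkov_solution ::
  "(real \<Rightarrow> real) \<Rightarrow> (real \<Rightarrow> real) \<Rightarrow> (real \<times> real \<Rightarrow> real) \<Rightarrow> bool" where
  "kruzhkov_solution f w0 w \<longleftrightarrow>
     w \<in> borel_measurable lborel \<and>
     (\<exists>M. \<forall>t x. t > 0 \<longrightarrow> \<bar>w (t, x)\<bar> \<le> M) \<and>
     (\<forall>k phi phit phix. test_fun phi phit phix \<longrightarrow>
        (LINT p : {0<..} \<times> UNIV | lborel.
            \<bar>w p - k\<bar> * phit p + sgn (w p - k) * (f (w p) - f k) * phix p)
        + (LINT x | lborel. \<bar>w0 x - k\<bar> * phi (0, x)) \<ge> 0)"

definition connects_left :: "(real \<Rightarrow> real) \<Rightarrow> real \<Rightarrow> real \<Rightarrow> bool" where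
  "connects_left fl um ul \<longleftrightarrow>
     (\<exists>w. kruzhkov_solution fl (\<lambda>x. if x < 0 then um else ul) w \<and>
          (AE p in lborel. fst p > 0 \<longrightarrow> snd p > 0 \<longrightarrow> w p = ul))"

definition connects_right :: "(real \<Rightarrow> real) \<Rightarrow> real \<Rightarrow> real \<Rightarrow> bool" where
  "connects_right fr ur up \<longleftrightarrow>
     (\<exists>w. kruzhkov_solution fr (\<lambda>x. if x < 0 then ur else up) w \<and>
          (AE p in lborel. fst p > 0 \<longrightarrow> snd p < 0 \<longrightarrow> w p = ur))"

definition complete_germ ::
  "(real \<Rightarrow> real) \<Rightarrow> (real \<Rightarrow> real) \<Rightarrow> (real \<times> real) set \<Rightarrow> bool" where
  "complete_germ fl fr G \<longleftrightarrow>
     (\<forall>um up. \<exists>(ul, ur) \<in> G. connects_left fl um ul \<and> connects_right fr ur up)"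

end

theory Submission
  imports Defs "HOL-Probability.Helly_Selection"
begin

text \<open>Given \<open>(u\<^sub>-, u\<^sub>+)\<close>, choose a pair of the germ that \<open>u\<^sub>-\<close> reaches by waves of
  nonpositive speed and from which \<open>u\<^sub>+\<close> is reached by waves of nonnegative speed. If
  \<open>u\<^sub>- \<le> u\<^sub>o\<^sup>l\<close> and \<open>u\<^sub>+ \<ge> u\<^sub>o\<^sup>r\<close> this is the pair of vertices. Otherwise \<open>u\<^sub>- > u\<^sub>o\<^sup>l\<close> or
  \<open>u\<^sub>+ < u\<^sub>o\<^sup>r\<close>; keep that state (\<open>u\<^sup>l = u\<^sub>-\<close>, resp. \<open>u\<^sup>r = u\<^sub>+\<close>; if both, the one with the
  larger flux value) and pair it with the state of equal flux value on the branch of the same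
  sign of the other flux. The one-sided connections exist because the entropy solution of the
  Riemann problem from \<open>u\<close> to \<open>v\<close> has all its waves on one side of \<open>x = 0\<close> as soon as
  \<open>f v\<close> is the minimum (if \<open>u < v\<close>) or the maximum (if \<open>v < u\<close>) of \<open>f\<close> between the two
  states.

  For a merely continuous flux this Riemann solution is obtained as a Helly limit of the exact
  solutions for the piecewise linear interpolants of \<open>f\<close> on finer and finer grids. Each of
  those is a self-similar step function read off the lower convex hull of the grid values;
  integrating its Kruzhkov inequality by parts leaves one term per shock, and these are
  nonnegative by Oleinik's chord condition.\<close>

section \<open>Integration over the half-plane \<open>t > 0\<close>\<close>

definition bounded_compact_support :: "('a::euclidean_space \<Rightarrow> real) \<Rightarrow> bool" where
  "bounded_compact_support g \<longleftrightarrow> g \<in> borel_measurable borel \<and>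
     (\<exists>K. compact K \<and> (\<forall>p. p \<notin> K \<longrightarrow> g p = 0)) \<and> (\<exists>C. \<forall>p. \<bar>g p\<bar> \<le> C)"

lemma bounded_compact_support_integrable:
  assumes "bounded_compact_support g" shows "integrable lborel g"
proof -
  from assms obtain K C where g: "g \<in> borel_measurable borel" "compact K"
      "\<And>p. p \<notin> K \<Longrightarrow> g p = 0" "\<And>p. \<bar>g p\<bar> \<le> C"
    unfolding bounded_compact_support_def by blast
  have "K \<in> sets lborel" using g(2) by (simp add: compact_imp_closed borel_closed)
  then have I: "integrable lborel (\<lambda>p. C * indicator K p :: real)"
    using emeasure_compact_finite[OF g(2)]
    by (intro integrable_mult_right integrable_real_indicator) auto
  moreover have "AE p in lborel. norm (g p) \<le> norm (C * indicator K p)"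
  proof (rule AE_I2)
    fix p show "norm (g p) \<le> norm (C * indicator K p)"
      using g(3)[of p] g(4)[of p] by (cases "p \<in> K") auto
  qed
  ultimately show ?thesis
    using g(1) by (intro Bochner_Integration.integrable_bound[OF I]) simp_all
qed

lemma bounded_compact_support_mult:
  assumes "bounded_compact_support g" "h \<in> borel_measurable borel" "\<And>p. \<bar>h p\<bar> \<le> D"
  shows "bounded_compact_support (\<lambda>p. h p * g p)"
proof -
  from assms obtain K C where g: "g \<in> borel_measurable borel" "compact K"
      "\<And>p. p \<notin> K \<Longrightarrow> g p = 0" "\<And>p. \<bar>g p\<bar> \<le> C"
    unfolding bounded_compact_support_def by blast
  have "\<bar>h p * g p\<bar> \<le> D * C" for p
    unfolding abs_mult using assms(3) g(4)
    by (intro mult_mono) (auto intro: order_trans[OF abs_ge_zero])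
  then show ?thesis using g assms(2) unfolding bounded_compact_support_def by auto
qed

lemma bounded_compact_support_cmult:
  "bounded_compact_support g \<Longrightarrow> bounded_compact_support (\<lambda>p. c * g p)"
  by (rule bounded_compact_support_mult) auto

lemma bounded_compact_support_indicator:
  "A \<in> sets borel \<Longrightarrow> bounded_compact_support g \<Longrightarrow> bounded_compact_support (\<lambda>p. indicator A p * g p)"
  by (rule bounded_compact_support_mult) (auto simp: indicator_def)

lemma bounded_compact_support_abs:
  "bounded_compact_support g \<Longrightarrow> bounded_compact_support (\<lambda>p. \<bar>g p\<bar>)"
  unfolding bounded_compact_support_def by auto

lemma bounded_compact_support_add:
  assumes "bounded_compact_support g" "bounded_compact_support h"
  shows "bounded_compact_support (\<lambda>p. g p + h p)"
proof -
  from assms obtain K C L D where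
    g: "g \<in> borel_measurable borel" "compact K" "\<And>p. p \<notin> K \<Longrightarrow> g p = 0" "\<And>p. \<bar>g p\<bar> \<le> C" and
    h: "h \<in> borel_measurable borel" "compact L" "\<And>p. p \<notin> L \<Longrightarrow> h p = 0" "\<And>p. \<bar>h p\<bar> \<le> D"
    unfolding bounded_compact_support_def by blast
  have "\<bar>g p + h p\<bar> \<le> C + D" for p using g(4)[of p] h(4)[of p] by linarith
  moreover have "compact (K \<union> L)" using g(2) h(2) by blast
  ultimately show ?thesis using g h
    unfolding bounded_compact_support_def by (intro conjI exI[of _ "K \<union> L"] exI[of _ "C + D"]) auto
qed

lemma bounded_compact_support_sum:
  assumes "finite I" "\<And>i. i \<in> I \<Longrightarrow> bounded_compact_support (g i)"
  shows "bounded_compact_support (\<lambda>p. \<Sum>i\<in>I. g i p)"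
  using assms
proof (induction I rule: finite_induct)
  case empty
  have "compact {}" by simp
  then show ?case unfolding bounded_compact_support_def by auto
qed (auto intro: bounded_compact_support_add)

lemma bounded_compact_support_continuous:
  assumes "continuous_on UNIV g" "compact K" "\<And>p. p \<notin> K \<Longrightarrow> g p = 0"
  shows "bounded_compact_support g"
proof -
  have "bounded (g ` K)"
    using assms(1,2)
    by (intro compact_imp_bounded compact_continuous_image) (auto intro: continuous_on_subset)
  then obtain C where "\<And>p. p \<in> K \<Longrightarrow> \<bar>g p\<bar> \<le> C" unfolding bounded_iff by auto
  then have "\<bar>g p\<bar> \<le> max C 0" for p using assms(3)[of p]
    by (cases "p \<in> K") (auto simp: le_max_iff_disj)
  moreover have "g \<in> borel_measurable borel" using assms(1)
    by (rule borel_measurable_continuous_onI)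
  ultimately show ?thesis using assms(2,3) unfolding bounded_compact_support_def by blast
qed

lemma right_of_line_borel: "{p::real \<times> real. s * fst p \<le> snd p} \<in> sets borel"
  by (intro borel_closed closed_Collect_le) (auto intro!: continuous_intros)

lemma bounded_compact_support_right_of_line:
  fixes h :: "real \<times> real \<Rightarrow> real"
  assumes "bounded_compact_support h"
  shows "bounded_compact_support (\<lambda>(t, x). indicator {s * t..} x * h (t, x))"
proof -
  have "(\<lambda>(t, x). indicator {s * t..} x * h (t, x))
      = (\<lambda>p. indicator {p. s * fst p \<le> snd p} p * h p)"
    by (auto simp: fun_eq_iff indicator_def)
  then show ?thesis using bounded_compact_support_indicator[OF right_of_line_borel[of s] assms]
    by simp
qed

lemma compact_support_shear:
  fixes g :: "real \<times> real \<Rightarrow> 'a::zero"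
  assumes "compact K" "\<And>p. p \<notin> K \<Longrightarrow> g p = 0"
  shows "\<exists>K'. compact K' \<and> (\<forall>p. p \<notin> K' \<longrightarrow> (\<lambda>(t, y). g (t, y + s * t)) p = 0)"
proof -
  define unsh where "unsh = (\<lambda>p :: real \<times> real. (fst p, snd p - s * fst p))"
  have "continuous_on UNIV unsh" unfolding unsh_def by (intro continuous_intros)
  then have "compact (unsh ` K)"
    by (intro compact_continuous_image assms(1)) (auto intro: continuous_on_subset)
  moreover have "(\<lambda>(t, y). g (t, y + s * t)) p = 0" if "p \<notin> unsh ` K" for p
  proof (cases p)
    case (Pair t y)
    have "(t, y + s * t) \<notin> K"
    proof
      assume "(t, y + s * t) \<in> K"
      then have "unsh (t, y + s * t) \<in> unsh ` K" by (rule imageI)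
      then show False using that Pair by (simp add: unsh_def)
    qed
    then show ?thesis using Pair assms(2) by simp
  qed
  ultimately show ?thesis by blast
qed

lemma bounded_compact_support_shear:
  fixes h :: "real \<times> real \<Rightarrow> real"
  assumes "bounded_compact_support h"
  shows "bounded_compact_support (\<lambda>(t, y). h (t, y + s * t))"
  unfolding bounded_compact_support_def
proof (intro conjI)
  from assms obtain K C where h: "h \<in> borel_measurable borel" "compact K"
      "\<And>p. p \<notin> K \<Longrightarrow> h p = 0" "\<And>p. \<bar>h p\<bar> \<le> C"
    unfolding bounded_compact_support_def by blast
  show "\<exists>K'. compact K' \<and> (\<forall>p. p \<notin> K' \<longrightarrow> (\<lambda>(t, y). h (t, y + s * t)) p = 0)"
    using h(2,3) by (rule compact_support_shear)
  show "\<exists>C. \<forall>p. \<bar>(\<lambda>(t, y). h (t, y + s * t)) p\<bar> \<le> C"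
    using h(4) by (intro exI[of _ C]) (simp add: case_prod_beta)
  have "(\<lambda>p :: real \<times> real. (fst p, snd p + s * fst p)) \<in> borel_measurable borel"
    by (intro borel_measurable_continuous_onI continuous_intros)
  from measurable_compose[OF this h(1)]
  show "(\<lambda>(t, y). h (t, y + s * t)) \<in> borel_measurable borel" by (simp add: case_prod_beta)
qed

definition halfplane_integral :: "(real \<times> real \<Rightarrow> real) \<Rightarrow> real" where
  "halfplane_integral h = (LINT p : {0<..} \<times> UNIV | lborel. h p)"

lemma halfplane_borel: "{0<..} \<times> UNIV \<in> sets (borel :: (real \<times> real) measure)"
  by (intro borel_open open_Times) auto

lemma integrable_halfplane:
  "bounded_compact_support (h :: real \<times> real \<Rightarrow> real) \<Longrightarrow>
     integrable lborel (\<lambda>p. indicator ({0<..} \<times> UNIV) p * h p)"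
  using bounded_compact_support_integrable bounded_compact_support_indicator[OF halfplane_borel]
  by blast

lemma halfplane_integral_iterated_fst:
  assumes "bounded_compact_support h"
  shows "halfplane_integral h = (\<integral>t. indicator {0<..} t * (\<integral>x. h (t, x) \<partial>lborel) \<partial>lborel)"
proof -
  let ?H = "\<lambda>p. indicator ({0<..} \<times> UNIV) p * h p"
  have I: "integrable (lborel \<Otimes>\<^sub>M lborel) ?H"
    using integrable_halfplane[OF assms] by (simp add: lborel_prod)
  have "halfplane_integral h = integral\<^sup>L (lborel \<Otimes>\<^sub>M lborel) ?H"
    unfolding halfplane_integral_def set_lebesgue_integral_def by (simp add: lborel_prod)
  also have "\<dots> = (\<integral>t. (\<integral>x. ?H (t, x) \<partial>lborel) \<partial>lborel)"
    by (rule lborel_pair.integral_fst'[OF I, symmetric])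
  also have "\<dots> = (\<integral>t. indicator {0<..} t * (\<integral>x. h (t, x) \<partial>lborel) \<partial>lborel)"
    by (auto simp: indicator_times split: split_indicator)
  finally show ?thesis .
qed

lemma halfplane_integral_iterated_snd:
  assumes "bounded_compact_support h"
  shows "halfplane_integral h = (\<integral>x. (\<integral>t. indicator {0<..} t * h (t, x) \<partial>lborel) \<partial>lborel)"
proof -
  let ?H = "\<lambda>p. indicator ({0<..} \<times> UNIV) p * h p"
  have e: "(\<lambda>(t, x). ?H (t, x)) = ?H" by auto
  have I: "integrable (lborel \<Otimes>\<^sub>M lborel) (\<lambda>(t, x). ?H (t, x))"
    using integrable_halfplane[OF assms] unfolding e by (simp add: lborel_prod)
  have "halfplane_integral h = integral\<^sup>L (lborel \<Otimes>\<^sub>M lborel) (\<lambda>(t, x). ?H (t, x))"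
    unfolding e halfplane_integral_def set_lebesgue_integral_def by (simp add: lborel_prod)
  also have "\<dots> = (\<integral>x. (\<integral>t. ?H (t, x) \<partial>lborel) \<partial>lborel)"
    by (rule lborel_pair.integral_snd[OF I, symmetric])
  also have "\<dots> = (\<integral>x. (\<integral>t. indicator {0<..} t * h (t, x) \<partial>lborel) \<partial>lborel)"
    by (auto simp: indicator_times split: split_indicator)
  finally show ?thesis .
qed

lemma halfplane_integral_add:
  assumes "bounded_compact_support g" "bounded_compact_support h"
  shows "halfplane_integral (\<lambda>p. g p + h p) = halfplane_integral g + halfplane_integral h"
  unfolding halfplane_integral_def set_lebesgue_integral_def real_scaleR_def distrib_left
  by (rule Bochner_Integration.integral_add[OF integrable_halfplane[OF assms(1)]
    integrable_halfplane[OF assms(2)]])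

lemma halfplane_integral_cmult: "halfplane_integral (\<lambda>p. c * g p) = c * halfplane_integral g"
  unfolding halfplane_integral_def set_lebesgue_integral_def real_scaleR_def
    mult.left_commute[of _ c]
  by simp

lemma halfplane_integral_sum:
  assumes "finite I" "\<And>i. i \<in> I \<Longrightarrow> bounded_compact_support (g i)"
  shows "halfplane_integral (\<lambda>p. \<Sum>i\<in>I. g i p) = (\<Sum>i\<in>I. halfplane_integral (g i))"
  unfolding halfplane_integral_def set_lebesgue_integral_def real_scaleR_def sum_distrib_left
  by (rule Bochner_Integration.integral_sum) (use integrable_halfplane assms(2) in auto)

lemma halfplane_integral_cong:
  "(\<And>t x. t > 0 \<Longrightarrow> g (t, x) = h (t, x)) \<Longrightarrow> halfplane_integral g = halfplane_integral h"
  unfolding halfplane_integral_def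
  by (rule set_lebesgue_integral_cong) (use halfplane_borel in auto)

lemma halfplane_integral_shear:
  assumes "bounded_compact_support h"
  shows "halfplane_integral h = halfplane_integral (\<lambda>(t, y). h (t, y + s * t))"
proof -
  have "(\<integral>x. h (t, x) \<partial>lborel) = (\<integral>y. h (t, y + s * t) \<partial>lborel)" for t
    using lborel_integral_real_affine[of 1 "\<lambda>x. h (t, x)" "s * t"] by (simp add: add.commute)
  then show ?thesis
    using halfplane_integral_iterated_fst[OF assms]
      halfplane_integral_iterated_fst[OF bounded_compact_support_shear[OF assms, of s]] by simp
qed

lemma integral_atLeast_derivative:
  fixes G g :: "real \<Rightarrow> real"
  assumes G': "\<And>x. (G has_real_derivative g x) (at x)" and "continuous_on UNIV g"
    and vanish: "\<And>x. \<bar>x\<bar> \<ge> R \<Longrightarrow> G x = 0 \<and> g x = 0"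
  shows "(\<integral>x. indicator {c..} x * g x \<partial>lborel) = - G c"
proof -
  define b where "b = \<bar>c\<bar> + \<bar>R\<bar>"
  have "c \<le> b" unfolding b_def by auto
  have "integral\<^sup>L lborel (\<lambda>x. indicator {c..b} x *\<^sub>R g x) = G b - G c"
  proof (rule integral_FTC_atLeastAtMost[OF \<open>c \<le> b\<close>])
    show "(G has_vector_derivative g x) (at x within {c..b})" for x
      using G'[of x] has_real_derivative_iff_has_vector_derivative has_vector_derivative_at_within
      by blast
    show "continuous_on {c..b} g" using assms(2) by (rule continuous_on_subset) simp
  qed
  moreover have "G b = 0" using vanish[of b] unfolding b_def by linarith
  moreover have "(\<lambda>x. indicator {c..} x * g x) = (\<lambda>x. indicator {c..b} x *\<^sub>R g x)"
  proof
    fix x show "indicator {c..} x * g x = indicator {c..b} x *\<^sub>R g x"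
    proof (cases "x \<le> b")
      case False
      then have "\<bar>x\<bar> \<ge> R" unfolding b_def by linarith
      then show ?thesis using vanish[of x] by simp
    qed (simp add: indicator_def)
  qed
  ultimately show ?thesis by simp
qed

lemma integral_greaterThan_derivative:
  fixes G g :: "real \<Rightarrow> real"
  assumes "\<And>x. (G has_real_derivative g x) (at x)" and "continuous_on UNIV g"
    and "\<And>x. \<bar>x\<bar> \<ge> R \<Longrightarrow> G x = 0 \<and> g x = 0"
  shows "(\<integral>x. indicator {c<..} x * g x \<partial>lborel) = - G c"
proof -
  have "g \<in> borel_measurable borel" using assms(2) by (rule borel_measurable_continuous_onI)
  then have "(\<integral>x. indicator {c<..} x * g x \<partial>lborel) = (\<integral>x. indicator {c..} x * g x \<partial>lborel)"
    by (intro integral_cong_AE AE_I'[of "{c}"]) (auto simp: indicator_def)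
  then show ?thesis using integral_atLeast_derivative[OF assms] by simp
qed

lemma integral_derivative_eq_0:
  fixes G g :: "real \<Rightarrow> real"
  assumes "\<And>x. (G has_real_derivative g x) (at x)" and "continuous_on UNIV g"
    and vanish: "\<And>x. \<bar>x\<bar> \<ge> R \<Longrightarrow> G x = 0 \<and> g x = 0"
  shows "(\<integral>x. g x \<partial>lborel) = 0"
proof -
  have "(\<lambda>x. indicator {- \<bar>R\<bar> - 1..} x * g x) = g"
  proof
    fix x show "indicator {- \<bar>R\<bar> - 1..} x * g x = g x"
    proof (cases "x \<ge> - \<bar>R\<bar> - 1")
      case False
      then have "\<bar>x\<bar> \<ge> R" by linarith
      then show ?thesis using vanish[of x] by simp
    qed (simp add: indicator_def)
  qed
  moreover have "G (- \<bar>R\<bar> - 1) = 0" using vanish[of "- \<bar>R\<bar> - 1"] by linarith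
  ultimately show ?thesis using integral_atLeast_derivative[of G g R "- \<bar>R\<bar> - 1", OF assms] by simp
qed

section \<open>Test functions\<close>

locale test_function =
  fixes phi phit phix :: "real \<times> real \<Rightarrow> real"
  assumes test_fun: "test_fun phi phit phix"
begin

lemma nonneg: "phi p \<ge> 0"
  using test_fun unfolding test_fun_def by (cases p) auto

lemma has_derivative: "(phi has_derivative (\<lambda>(s, y). s * phit p + y * phix p)) (at p)"
  using test_fun unfolding test_fun_def by (cases p) auto

lemma continuous_phit: "continuous_on UNIV phit" and continuous_phix: "continuous_on UNIV phix"
  using test_fun unfolding test_fun_def by auto

lemma continuous_phi: "continuous_on UNIV phi"
  using has_derivative by (meson continuous_at_imp_continuous_on has_derivative_continuous)

lemma vanish_outside_compact:
  "\<exists>K. compact K \<and> (\<forall>p. p \<notin> K \<longrightarrow> phi p = 0 \<and> phit p = 0 \<and> phix p = 0)"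
proof -
  obtain K where K: "compact K" "\<And>p. p \<notin> K \<Longrightarrow> phi p = 0"
    using test_fun unfolding test_fun_def by auto
  have "phit p = 0 \<and> phix p = 0" if "p \<notin> K" for p
  proof -
    have "open (- K)" using K(1) by (simp add: compact_imp_closed open_Compl)
    have "((\<lambda>_. 0::real) has_derivative (\<lambda>_. 0)) (at p)" by simp
    then have "(phi has_derivative (\<lambda>_. 0)) (at p)"
      by (rule has_derivative_transform_within_open[OF _ \<open>open (-K)\<close>]) (use that K in auto)
    from has_derivative_unique[OF has_derivative this]
    have e: "(\<lambda>(s, y). s * phit p + y * phix p) = (\<lambda>_. 0)" .
    from fun_cong[OF e, of "(1, 0)"] fun_cong[OF e, of "(0, 1)"] show ?thesis by simp
  qed
  then show ?thesis using K by blast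
qed

lemma bounded_compact_support_phit: "bounded_compact_support phit"
  and bounded_compact_support_phix: "bounded_compact_support phix"
proof -
  obtain K where K: "compact K" "\<forall>p. p \<notin> K \<longrightarrow> phi p = 0 \<and> phit p = 0 \<and> phix p = 0"
    using vanish_outside_compact by blast
  show "bounded_compact_support phit"
    by (rule bounded_compact_support_continuous[OF continuous_phit K(1)]) (use K(2) in blast)
  show "bounded_compact_support phix"
    by (rule bounded_compact_support_continuous[OF continuous_phix K(1)]) (use K(2) in blast)
qed

lemma vanish_outside_square:
  "\<exists>R. \<forall>t x. R \<le> \<bar>t\<bar> \<or> R \<le> \<bar>x\<bar> \<longrightarrow> phi (t, x) = 0 \<and> phit (t, x) = 0 \<and> phix (t, x) = 0"
proof -
  obtain K where K: "compact K" "\<forall>p. p \<notin> K \<longrightarrow> phi p = 0 \<and> phit p = 0 \<and> phix p = 0"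
    using vanish_outside_compact by blast
  obtain R where R: "K \<subseteq> ball 0 R" using compact_imp_bounded[OF K(1)] bounded_subset_ballD by blast
  have "(t, x) \<notin> K" if "R \<le> \<bar>t\<bar> \<or> R \<le> \<bar>x\<bar>" for t x
  proof
    assume "(t, x) \<in> K"
    then have "norm (t, x) < R" using R by auto
    moreover have "\<bar>t\<bar> \<le> norm (t, x)" "\<bar>x\<bar> \<le> norm (t, x)"
      by (metis fst_conv norm_fst_le real_norm_def, metis snd_conv norm_snd_le real_norm_def)
    ultimately show False using that by linarith
  qed
  then show ?thesis using K(2) by blast
qed

lemma has_real_derivative_t: "((\<lambda>t. phi (t, x)) has_real_derivative phit (t, x)) (at t)"
proof -
  have "((\<lambda>t. (t, x)) has_derivative (\<lambda>s. (s, 0))) (at t)"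
    by (auto intro!: derivative_eq_intros)
  from has_derivative_compose[OF this has_derivative[of "(t, x)"]]
  show ?thesis unfolding has_field_derivative_def
    by (rule has_derivative_eq_rhs) (auto simp: fun_eq_iff mult.commute)
qed

lemma has_real_derivative_x: "((\<lambda>x. phi (t, x)) has_real_derivative phix (t, x)) (at x)"
proof -
  have "((\<lambda>x. (t, x)) has_derivative (\<lambda>s. (0, s))) (at x)"
    by (auto intro!: derivative_eq_intros)
  from has_derivative_compose[OF this has_derivative[of "(t, x)"]]
  show ?thesis unfolding has_field_derivative_def
    by (rule has_derivative_eq_rhs) (auto simp: fun_eq_iff mult.commute)
qed

lemma integrable_initial_trace: "integrable lborel (\<lambda>x. phi (0, x))"
proof -
  obtain R where R: "\<And>t x. R \<le> \<bar>t\<bar> \<or> R \<le> \<bar>x\<bar> \<Longrightarrow> phi (t, x) = 0"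
    using vanish_outside_square by blast
  have "continuous_on UNIV (\<lambda>x. phi (0, x))"
    by (rule continuous_on_compose2[OF continuous_phi]) (auto intro!: continuous_intros)
  moreover have "phi (0, x) = 0" if "x \<notin> {-R..R}" for x
    using that by (intro R) auto
  ultimately have "bounded_compact_support (\<lambda>x. phi (0, x))"
    by (intro bounded_compact_support_continuous[of _ "{-R..R}"]) auto
  then show ?thesis by (rule bounded_compact_support_integrable)
qed

lemma halfplane_integral_weighted_phit:
  assumes a: "a \<in> borel_measurable borel" "\<And>x. \<bar>a x\<bar> \<le> C"
  shows "halfplane_integral (\<lambda>(t, x). a x * phit (t, x)) = - (\<integral>x. a x * phi (0, x) \<partial>lborel)"
proof -
  obtain R where R: "\<And>t x. R \<le> \<bar>t\<bar> \<or> R \<le> \<bar>x\<bar> \<Longrightarrow> phi (t, x) = 0 \<and> phit (t, x) = 0"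
    using vanish_outside_square by blast
  have "snd \<in> borel_measurable (borel :: (real \<times> real) measure)"
    by (intro borel_measurable_continuous_onI continuous_intros)
  from measurable_compose[OF this a(1)]
  have "(\<lambda>p :: real \<times> real. a (snd p)) \<in> borel_measurable borel" by (simp add: o_def)
  then have "bounded_compact_support (\<lambda>p. a (snd p) * phit p)"
    using a(2) by (intro bounded_compact_support_mult[OF bounded_compact_support_phit])
  moreover have "(\<lambda>p. a (snd p) * phit p) = (\<lambda>(t, x). a x * phit (t, x))" by auto
  ultimately have bcs: "bounded_compact_support (\<lambda>(t, x). a x * phit (t, x))" by simp
  have "(\<integral>t. indicator {0<..} t * phit (t, x) \<partial>lborel) = - phi (0, x)" for x
  proof (rule integral_greaterThan_derivative[where R = R])
    show "continuous_on UNIV (\<lambda>t. phit (t, x))"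
      by (rule continuous_on_compose2[OF continuous_phit]) (auto intro!: continuous_intros)
  qed (use R has_real_derivative_t in auto)
  then have "(\<integral>t. indicator {0<..} t * (a x * phit (t, x)) \<partial>lborel) = - (a x * phi (0, x))" for x
    by (simp add: mult.left_commute[of _ "a x"])
  then show ?thesis using halfplane_integral_iterated_snd[OF bcs] by simp
qed

lemma halfplane_integral_phit: "halfplane_integral phit = - (\<integral>x. phi (0, x) \<partial>lborel)"
  using halfplane_integral_weighted_phit[of "\<lambda>_. 1" 1] by simp

lemma halfplane_integral_phix: "halfplane_integral phix = 0"
proof -
  obtain R where R: "\<And>t x. R \<le> \<bar>t\<bar> \<or> R \<le> \<bar>x\<bar> \<Longrightarrow> phi (t, x) = 0 \<and> phix (t, x) = 0"
    using vanish_outside_square by blast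
  have "(\<integral>x. phix (t, x) \<partial>lborel) = 0" for t
  proof (rule integral_derivative_eq_0[where G = "\<lambda>x. phi (t, x)" and R = R])
    show "((\<lambda>x. phi (t, x)) has_real_derivative phix (t, x)) (at x)" for x
      by (rule has_real_derivative_x)
    show "continuous_on UNIV (\<lambda>x. phix (t, x))"
      by (rule continuous_on_compose2[OF continuous_phix]) (auto intro!: continuous_intros)
  qed (use R in blast)
  then show ?thesis using halfplane_integral_iterated_fst[OF bounded_compact_support_phix] by simp
qed

lemma halfplane_integral_right_of_line_phix_nonpos:
  "halfplane_integral (\<lambda>(t, x). indicator {s * t..} x * phix (t, x)) \<le> 0"
proof -
  obtain R where R: "\<And>t x. R \<le> \<bar>t\<bar> \<or> R \<le> \<bar>x\<bar> \<Longrightarrow> phi (t, x) = 0 \<and> phix (t, x) = 0"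
    using vanish_outside_square by blast
  have "(\<integral>x. indicator {s * t..} x * phix (t, x) \<partial>lborel) = - phi (t, s * t)" for t
  proof (rule integral_atLeast_derivative[where R = R])
    show "continuous_on UNIV (\<lambda>x. phix (t, x))"
      by (rule continuous_on_compose2[OF continuous_phix]) (auto intro!: continuous_intros)
  qed (use R has_real_derivative_x in auto)
  then have "halfplane_integral (\<lambda>(t, x). indicator {s * t..} x * phix (t, x))
      = - (\<integral>t. indicator {0<..} t * phi (t, s * t) \<partial>lborel)"
    using halfplane_integral_iterated_fst[OF
      bounded_compact_support_right_of_line[OF bounded_compact_support_phix]]
    by simp
  moreover have "0 \<le> (\<integral>t. indicator {0<..} t * phi (t, s * t) \<partial>lborel)"
    by (rule Bochner_Integration.integral_nonneg) (simp add: nonneg)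
  ultimately show ?thesis by simp
qed

end

lemma test_function_shear:
  assumes "test_function phi phit phix"
  shows "test_function (\<lambda>(t, y). phi (t, y + s * t))
    (\<lambda>(t, y). phit (t, y + s * t) + s * phix (t, y + s * t)) (\<lambda>(t, y). phix (t, y + s * t))"
proof -
  interpret test_function phi phit phix by (fact assms)
  define sh where "sh = (\<lambda>p :: real \<times> real. (fst p, snd p + s * fst p))"
  have sh_cont: "continuous_on UNIV sh" unfolding sh_def by (intro continuous_intros)
  have sh_deriv: "(sh has_derivative sh) (at p)" for p
    unfolding sh_def by (auto intro!: derivative_eq_intros)
  obtain K where "compact K" "\<And>p. p \<notin> K \<Longrightarrow> phi p = 0"
    using vanish_outside_compact by blast
  then have "\<exists>K'. compact K' \<and> (\<forall>p. p \<notin> K' \<longrightarrow> (\<lambda>(t, y). phi (t, y + s * t)) p = 0)"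
    by (rule compact_support_shear)
  moreover have "((\<lambda>p. phi (sh p)) has_derivative
      (\<lambda>(a, b). a * (phit (sh p) + s * phix (sh p)) + b * phix (sh p))) (at p)" for p
    using has_derivative_compose[OF sh_deriv has_derivative[of "sh p"]]
    by (rule has_derivative_eq_rhs) (auto simp: fun_eq_iff sh_def algebra_simps)
  moreover have "continuous_on UNIV (\<lambda>p. phit (sh p) + s * phix (sh p))"
    and "continuous_on UNIV (\<lambda>p. phix (sh p))"
    by (intro continuous_intros continuous_on_compose2[OF continuous_phit sh_cont]
        continuous_on_compose2[OF continuous_phix sh_cont]; simp)+
  ultimately show ?thesis
    unfolding test_function_def test_fun_def sh_def case_prod_beta using nonneg
    by (auto simp: case_prod_beta)
qed

context test_function
begin

lemma halfplane_integral_wedge: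
  "halfplane_integral (\<lambda>(t, x). indicator {s * t..} x * (phit (t, x) + s * phix (t, x)))
     = - (\<integral>x. indicator {0..} x * phi (0, x) \<partial>lborel)"
proof -
  interpret sheared: test_function "\<lambda>(t, y). phi (t, y + s * t)"
      "\<lambda>(t, y). phit (t, y + s * t) + s * phix (t, y + s * t)" "\<lambda>(t, y). phix (t, y + s * t)"
    by (rule test_function_shear) unfold_locales
  have bcs: "bounded_compact_support (\<lambda>(t, x). indicator {s * t..} x
      * (phit (t, x) + s * phix (t, x)))"
    by (intro bounded_compact_support_right_of_line bounded_compact_support_add
        bounded_compact_support_cmult bounded_compact_support_phit bounded_compact_support_phix)
  have "halfplane_integral (\<lambda>(t, x). indicator {s * t..} x * (phit (t, x) + s * phix (t, x)))
      = halfplane_integral (\<lambda>(t, y). indicator {0..} y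
        * (phit (t, y + s * t) + s * phix (t, y + s * t)))"
    using halfplane_integral_shear[OF bcs, of s] by (simp add: indicator_def)
  also have "\<dots> = - (\<integral>y. indicator {0..} y * phi (0, y) \<partial>lborel)"
    using sheared.halfplane_integral_weighted_phit[of "indicator {0..}" 1]
    by (simp add: indicator_def)
  finally show ?thesis .
qed

end

section \<open>The Kruzhkov inequality for self-similar step functions\<close>

definition kruzhkov_functional ::
  "(real \<Rightarrow> real) \<Rightarrow> (real \<Rightarrow> real) \<Rightarrow> (real \<times> real \<Rightarrow> real) \<Rightarrow> real \<Rightarrow> real \<Rightarrow>
   (real \<times> real \<Rightarrow> real) \<Rightarrow> (real \<times> real \<Rightarrow> real) \<Rightarrow> (real \<times> real \<Rightarrow> real) \<Rightarrow> real" where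
  "kruzhkov_functional f w0 w k c phi phit phix =
     halfplane_integral (\<lambda>p. \<bar>w p - k\<bar> * phit p + sgn (w p - k) * (f (w p) - c) * phix p)
     + (\<integral>x. \<bar>w0 x - k\<bar> * phi (0, x) \<partial>lborel)"

lemma kruzhkov_solution_iff:
  "kruzhkov_solution f w0 w \<longleftrightarrow> w \<in> borel_measurable lborel \<and> (\<exists>M. \<forall>t x. t > 0 \<longrightarrow> \<bar>w (t, x)\<bar> \<le> M) \<and>
     (\<forall>k phi phit phix. test_fun phi phit phix \<longrightarrow> 0
       \<le> kruzhkov_functional f w0 w k (f k) phi phit phix)"
  unfolding kruzhkov_solution_def kruzhkov_functional_def halfplane_integral_def ..

lemma step_profile_as_jump_sum:
  fixes a :: "nat \<Rightarrow> real" and idx :: "real \<Rightarrow> nat"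
  assumes "idx \<xi> \<le> n" and jump: "\<And>i. 1 \<le> i \<Longrightarrow> i \<le> n \<Longrightarrow> \<tau> i \<le> \<xi> \<longleftrightarrow> i \<le> idx \<xi>"
  shows "a (idx \<xi>) = a 0 + (\<Sum>i = 1..n. (a i - a (i - 1)) * indicator {\<tau> i..} \<xi>)"
proof -
  have "(\<Sum>i = 1..n. (a i - a (i - 1)) * indicator {\<tau> i..} \<xi>)
      = (\<Sum>i = 1..n. if i \<le> idx \<xi> then a i - a (i - 1) else 0)"
    by (rule sum.cong) (auto simp: jump indicator_def)
  also have "\<dots> = (\<Sum>i\<in>{1..n} \<inter> {i. i \<le> idx \<xi>}. a i - a (i - 1))"
    by (subst sum.inter_restrict) auto
  also have "{1..n} \<inter> {i. i \<le> idx \<xi>} = {Suc 0..idx \<xi>}" using assms(1) by auto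
  finally show ?thesis using sum_telescope''[of 0 "idx \<xi>" a] by simp
qed

context test_function
begin

text \<open>The Kruzhkov integrand of a self-similar step function with values \<open>a i\<close> (entropy) and \<open>b i\<close>
  (entropy flux), which jumps from index \<open>i - 1\<close> to \<open>i\<close> along the ray \<open>x = \<tau> i * t\<close>, integrates to
  the sum of the Rankine--Hugoniot defects of its jumps, each weighted by a nonpositive number.\<close>

lemma halfplane_integral_step_fan:
  fixes a b :: "nat \<Rightarrow> real" and idx :: "real \<Rightarrow> nat"
  assumes idx: "\<And>\<xi>. idx \<xi> \<le> n" and jump: "\<And>i \<xi>. 1 \<le> i \<Longrightarrow> i \<le> n \<Longrightarrow> \<tau> i \<le> \<xi> \<longleftrightarrow> i \<le> idx \<xi>"
  shows "halfplane_integral (\<lambda>p. a (idx (snd p / fst p)) * phit p + b (idx (snd p / fst p))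
      * phix p)
      + (\<integral>x. (if x < 0 then a 0 else a n) * phi (0, x) \<partial>lborel)
    = (\<Sum>i = 1..n. (b i - b (i - 1) - \<tau> i * (a i - a (i - 1)))
         * halfplane_integral (\<lambda>(t, x). indicator {\<tau> i * t..} x * phix (t, x)))"
proof -
  define C where "C i = b i - b (i - 1) - \<tau> i * (a i - a (i - 1))" for i
  define wedge where "wedge i = (\<lambda>(t, x). indicator {\<tau> i * t..} x
      * (phit (t, x) + \<tau> i * phix (t, x)))" for i
  define right where "right i = (\<lambda>(t, x). indicator {\<tau> i * t..} x * phix (t, x))" for i
  define I0 where "I0 = (\<integral>x. phi (0, x) \<partial>lborel)"
  define Ip where "Ip = (\<integral>x. indicator {0..} x * phi (0, x) \<partial>lborel)"
  have bcs_wedge: "bounded_compact_support (wedge i)" for i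
    unfolding wedge_def by (intro bounded_compact_support_right_of_line bounded_compact_support_add
        bounded_compact_support_cmult bounded_compact_support_phit bounded_compact_support_phix)
  have bcs_right: "bounded_compact_support (right i)" for i
    unfolding right_def
    by (intro bounded_compact_support_right_of_line bounded_compact_support_phix)
  have bcs_jump: "bounded_compact_support (\<lambda>p. (a i - a (i - 1)) * wedge i p + C i * right i p)"
    for i
    by (intro bounded_compact_support_add bounded_compact_support_cmult bcs_wedge bcs_right)
  have integrand: "a (idx (x / t)) * phit (t, x) + b (idx (x / t)) * phix (t, x)
      = a 0 * phit (t, x) + b 0 * phix (t, x)
        + (\<Sum>i = 1..n. (a i - a (i - 1)) * wedge i (t, x) + C i * right i (t, x))" if "t > 0" for t x
  proof -
    have ind: "indicator {\<tau> i..} (x / t) = (indicator {\<tau> i * t..} x :: real)" for i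
      using that by (simp add: indicator_def pos_le_divide_eq)
    have ra: "a (idx (x / t)) = a 0 + (\<Sum>i = 1..n. (a i - a (i - 1)) * indicator {\<tau> i * t..} x)"
      and rb: "b (idx (x / t)) = b 0 + (\<Sum>i = 1..n. (b i - b (i - 1)) * indicator {\<tau> i * t..} x)"
      using step_profile_as_jump_sum[of idx "x / t", OF idx jump] unfolding ind by blast+
    have "a (idx (x / t)) * phit (t, x) + b (idx (x / t)) * phix (t, x)
        = a 0 * phit (t, x) + b 0 * phix (t, x)
          + (\<Sum>i = 1..n. (a i - a (i - 1)) * indicator {\<tau> i * t..} x * phit (t, x)
              + (b i - b (i - 1)) * indicator {\<tau> i * t..} x * phix (t, x))"
      unfolding ra rb distrib_right sum_distrib_right sum.distrib
      by (simp only: add_ac)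
    also have "\<dots> = a 0 * phit (t, x) + b 0 * phix (t, x)
        + (\<Sum>i = 1..n. (a i - a (i - 1)) * wedge i (t, x) + C i * right i (t, x))"
      by (intro arg_cong[where f = "\<lambda>s. _ + s"] sum.cong refl)
        (simp add: wedge_def right_def C_def algebra_simps)
    finally show ?thesis .
  qed
  have "halfplane_integral (\<lambda>p. a (idx (snd p / fst p)) * phit p + b (idx (snd p / fst p)) * phix p)
      = halfplane_integral (\<lambda>p. (a 0 * phit p + b 0 * phix p)
          + (\<Sum>i = 1..n. (a i - a (i - 1)) * wedge i p + C i * right i p))"
    by (rule halfplane_integral_cong) (simp add: integrand)
  also have "\<dots> = a 0 * halfplane_integral phit + b 0 * halfplane_integral phix
      + (\<Sum>i = 1..n. (a i - a (i - 1)) * halfplane_integral (wedge i) + C i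
        * halfplane_integral (right i))"
    by (simp add: halfplane_integral_add halfplane_integral_sum halfplane_integral_cmult bcs_jump
        bounded_compact_support_sum bounded_compact_support_add bounded_compact_support_cmult
        bounded_compact_support_phit bounded_compact_support_phix bcs_wedge bcs_right)
  also have "\<dots> = - a 0 * I0 + (\<Sum>i = 1..n. (a i - a (i - 1)) * (- Ip) + C i
      * halfplane_integral (right i))"
    using halfplane_integral_wedge unfolding wedge_def Ip_def I0_def
    by (simp add: halfplane_integral_phit halfplane_integral_phix)
  also have "\<dots> = - a 0 * I0 - (\<Sum>i = 1..n. a i - a (i - 1)) * Ip
      + (\<Sum>i = 1..n. C i * halfplane_integral (right i))"
    by (simp add: sum.distrib sum_distrib_right sum_subtractf left_diff_distrib)
  also have "\<dots> = - a 0 * I0 - (a n - a 0) * Ip + (\<Sum>i = 1..n. C i * halfplane_integral (right i))"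
    using sum_telescope''[of 0 n a] by simp
  finally have "halfplane_integral (\<lambda>p. a (idx (snd p / fst p)) * phit p + b (idx (snd p / fst p))
      * phix p)
      = - a 0 * I0 - (a n - a 0) * Ip + (\<Sum>i = 1..n. C i * halfplane_integral (right i))" .
  moreover have "(\<integral>x. (if x < 0 then a 0 else a n) * phi (0, x) \<partial>lborel) = a 0 * I0 + (a n - a 0)
      * Ip"
  proof -
    have "(\<lambda>x. (if x < 0 then a 0 else a n) * phi (0, x))
        = (\<lambda>x. a 0 * phi (0, x) + (a n - a 0) * (indicator {0..} x * phi (0, x)))"
      by (auto simp: fun_eq_iff indicator_def algebra_simps)
    moreover have "integrable lborel (\<lambda>x. indicator {0..} x * phi (0, x))"
      using integrable_real_mult_indicator[OF _ integrable_initial_trace, of "{0..}"]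
      by (simp add: mult.commute)
    ultimately show ?thesis using integrable_initial_trace unfolding I0_def Ip_def by simp
  qed
  ultimately show ?thesis unfolding C_def right_def by simp
qed

end

section \<open>The Riemann problem for piecewise linear fluxes\<close>

text \<open>Oleinik's chord condition (the flux value \<open>F\<close> at any \<open>k\<close> between the states lies above the
  chord of slope \<open>t\<close>) gives the Kruzhkov inequality for the shock from \<open>a\<close> to \<open>b\<close> of speed \<open>t\<close>.\<close>

lemma shock_kruzhkov_inequality:
  fixes a b k F fa fb t m :: real
  assumes "a < b" and "fa - t * a = m" and "fb - t * b = m"
    and chord: "a \<le> k \<Longrightarrow> k \<le> b \<Longrightarrow> m \<le> F - t * k"
  shows "0 \<le> t * (\<bar>b - k\<bar> - \<bar>a - k\<bar>) - (sgn (b - k) * (fb - F) - sgn (a - k) * (fa - F))"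
proof -
  consider "k < a" | "b < k" | "k = a" | "k = b" | "a < k" "k < b" by linarith
  then show ?thesis
  proof cases
    case 5
    then have "\<bar>b - k\<bar> = b - k" "\<bar>a - k\<bar> = k - a" "sgn (b - k) = 1" "sgn (a - k) = -1" by auto
    then show ?thesis using assms(2,3) chord 5 by (simp add: algebra_simps)
  qed (use assms in \<open>auto simp: algebra_simps\<close>)
qed

text \<open>The discrete Riemann solver on the grid \<open>node 0 = uL < \<dots> < node n = uR\<close>: at speed \<open>\<xi>\<close> the
  solution takes the value at the largest grid index minimising \<open>f (node i) - \<xi> * node i\<close>. This is
  the exact entropy solution for the piecewise linear interpolant of \<open>f\<close>; its jumps are the
  edges of the lower convex hull of the grid points of the graph of \<open>f\<close>.\<close>

locale flux_grid =
  fixes uL uR :: real and n :: nat and f :: "real \<Rightarrow> real"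
  assumes lr: "uL < uR" and n_pos: "0 < n"
begin

definition step :: real where "step = (uR - uL) / n"

definition node :: "nat \<Rightarrow> real" where "node i = uL + i * step"

definition tilt :: "real \<Rightarrow> nat \<Rightarrow> real" where "tilt \<xi> i = f (node i) - \<xi> * node i"

definition min_tilt :: "real \<Rightarrow> real" where "min_tilt \<xi> = Min (tilt \<xi> ` {0..n})"

definition hull_index :: "real \<Rightarrow> nat" where
  "hull_index \<xi> = Max {i. i \<le> n \<and> tilt \<xi> i = min_tilt \<xi>}"

lemma step_pos: "step > 0"
  unfolding step_def using lr n_pos by simp

lemma node_less: "i < j \<Longrightarrow> node i < node j"
  unfolding node_def using step_pos by simp

lemma node_le: "i \<le> j \<Longrightarrow> node i \<le> node j"
  unfolding node_def using step_pos by (simp add: mult_right_mono)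

lemma node_0: "node 0 = uL" and node_n: "node n = uR"
  unfolding node_def step_def using n_pos by auto

lemma node_range: "i \<le> n \<Longrightarrow> node i \<in> {uL..uR}"
  using node_le[of 0 i] node_le[of i n] node_0 node_n by auto

lemma node_Suc: "node (Suc i) - node i = step"
  unfolding node_def by (simp add: algebra_simps)

lemma min_tilt_le: "j \<le> n \<Longrightarrow> min_tilt \<xi> \<le> tilt \<xi> j"
  unfolding min_tilt_def by (rule Min_le) auto

lemma hull_index: "hull_index \<xi> \<le> n" "tilt \<xi> (hull_index \<xi>) = min_tilt \<xi>"
proof -
  have "min_tilt \<xi> \<in> tilt \<xi> ` {0..n}" unfolding min_tilt_def by (rule Min_in) auto
  then have "{i. i \<le> n \<and> tilt \<xi> i = min_tilt \<xi>} \<noteq> {}" by auto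
  from Max_in[OF _ this] show "hull_index \<xi> \<le> n" "tilt \<xi> (hull_index \<xi>) = min_tilt \<xi>"
    unfolding hull_index_def by auto
qed

lemma hull_index_le: "hull_index \<xi> \<le> n"
  by (fact hull_index(1))

lemma hull_index_minimal: "j \<le> n \<Longrightarrow> tilt \<xi> (hull_index \<xi>) \<le> tilt \<xi> j"
  using hull_index(2) min_tilt_le by simp

lemma hull_index_greatest: "j \<le> n \<Longrightarrow> tilt \<xi> j \<le> tilt \<xi> (hull_index \<xi>) \<Longrightarrow> j \<le> hull_index \<xi>"
  using min_tilt_le[of j \<xi>] hull_index(2)[of \<xi>] unfolding hull_index_def by (intro Max_ge) auto

lemma hull_index_mono: "\<xi>1 \<le> \<xi>2 \<Longrightarrow> hull_index \<xi>1 \<le> hull_index \<xi>2"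
proof (rule ccontr)
  assume "\<xi>1 \<le> \<xi>2" "\<not> hull_index \<xi>1 \<le> hull_index \<xi>2"
  define j1 j2 where "j1 = hull_index \<xi>1" and "j2 = hull_index \<xi>2"
  have "tilt \<xi>1 j1 \<le> tilt \<xi>1 j2" "tilt \<xi>2 j2 \<le> tilt \<xi>2 j1"
    unfolding j1_def j2_def by (intro hull_index_minimal hull_index_le)+
  then have "(\<xi>2 - \<xi>1) * (node j1 - node j2) \<le> 0" unfolding tilt_def by (simp add: algebra_simps)
  moreover have "node j2 < node j1" using \<open>\<not> hull_index \<xi>1 \<le> hull_index \<xi>2\<close>
    unfolding j1_def j2_def by (intro node_less) simp
  ultimately have "\<xi>2 - \<xi>1 \<le> 0" by (simp add: mult_le_0_iff)
  then have "\<xi>1 = \<xi>2" using \<open>\<xi>1 \<le> \<xi>2\<close> by simp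
  then show False using \<open>\<not> hull_index \<xi>1 \<le> hull_index \<xi>2\<close> by simp
qed

lemma hull_index_right_constant: "eventually (\<lambda>\<xi>'. hull_index \<xi>' = hull_index \<xi>) (at_right \<xi>)"
proof -
  define j where "j = hull_index \<xi>"
  have "eventually (\<lambda>\<xi>'. tilt \<xi>' j < tilt \<xi>' l) (at \<xi>)" if "l \<in> {j<..n}" for l
  proof -
    have "tilt \<xi> j < tilt \<xi> l"
      using that hull_index_greatest[of l \<xi>] unfolding j_def by force
    moreover have "((\<lambda>\<xi>'. tilt \<xi>' l - tilt \<xi>' j) \<longlongrightarrow> tilt \<xi> l - tilt \<xi> j) (at \<xi>)"
      unfolding tilt_def by (intro tendsto_intros)
    ultimately have "eventually (\<lambda>\<xi>'. tilt \<xi>' l - tilt \<xi>' j > 0) (at \<xi>)"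
      by (intro order_tendstoD(1)) auto
    then show ?thesis by (rule eventually_mono) auto
  qed
  then have "eventually (\<lambda>\<xi>'. \<forall>l\<in>{j<..n}. tilt \<xi>' j < tilt \<xi>' l) (at_right \<xi>)"
    by (intro eventually_ball_finite eventually_at_split[THEN iffD1, THEN conjunct2] ballI) auto
  moreover have "eventually (\<lambda>\<xi>'. \<xi> < \<xi>') (at_right \<xi>)" by (simp add: eventually_at_right_less)
  ultimately show ?thesis
  proof eventually_elim
    case (elim \<xi>')
    have "hull_index \<xi>' \<le> j"
    proof (rule ccontr)
      assume "\<not> hull_index \<xi>' \<le> j"
      then have "tilt \<xi>' j < tilt \<xi>' (hull_index \<xi>')" using elim(1) hull_index_le[of \<xi>'] by auto
      then show False using hull_index_minimal[of j \<xi>'] hull_index_le[of \<xi>] unfolding j_def by simp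
    qed
    moreover have "j \<le> hull_index \<xi>'" unfolding j_def using elim(2) by (intro hull_index_mono) simp
    ultimately show ?case unfolding j_def by simp
  qed
qed

lemma eventually_hull_index_n: "eventually (\<lambda>\<xi>. hull_index \<xi> = n) at_top"
proof -
  have "eventually (\<lambda>\<xi>. tilt \<xi> n \<le> tilt \<xi> j) at_top" if "j \<le> n" for j
    using eventually_ge_at_top[of "(f (node n) - f (node j)) / (node n - node j)"]
  proof eventually_elim
    case (elim \<xi>)
    show ?case
    proof (cases "j = n")
      case False
      then have "node j < node n" using that by (intro node_less) simp
      then have "f (node n) - f (node j) \<le> \<xi> * (node n - node j)"
        using elim by (simp add: pos_divide_le_eq)
      then show ?thesis unfolding tilt_def by (simp add: algebra_simps)
    qed simp
  qed
  then have "eventually (\<lambda>\<xi>. \<forall>j\<in>{..n}. tilt \<xi> n \<le> tilt \<xi> j) at_top"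
    by (intro eventually_ball_finite) auto
  then show ?thesis
  proof eventually_elim
    case (elim \<xi>)
    have "n \<le> hull_index \<xi>" using elim hull_index_le[of \<xi>] by (intro hull_index_greatest) auto
    then show ?case using hull_index_le[of \<xi>] by simp
  qed
qed

lemma eventually_hull_index_0: "eventually (\<lambda>\<xi>. hull_index \<xi> = 0) at_bot"
proof -
  have "eventually (\<lambda>\<xi>. tilt \<xi> 0 < tilt \<xi> j) at_bot" if "0 < j" "j \<le> n" for j
    using eventually_gt_at_bot[of "(f (node j) - f (node 0)) / (node j - node 0)"]
  proof eventually_elim
    case (elim \<xi>)
    have "node 0 < node j" using that by (intro node_less) simp
    then have "\<xi> * (node j - node 0) < f (node j) - f (node 0)"
      using elim by (simp add: pos_less_divide_eq)
    then show ?case unfolding tilt_def by (simp add: algebra_simps)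
  qed
  then have "eventually (\<lambda>\<xi>. \<forall>j\<in>{0<..n}. tilt \<xi> 0 < tilt \<xi> j) at_bot"
    by (intro eventually_ball_finite) auto
  then show ?thesis
  proof eventually_elim
    case (elim \<xi>)
    show ?case
    proof (rule ccontr)
      assume "hull_index \<xi> \<noteq> 0"
      then have "tilt \<xi> 0 < tilt \<xi> (hull_index \<xi>)" using elim hull_index_le[of \<xi>] by auto
      then show False using hull_index_minimal[of 0 \<xi>] by simp
    qed
  qed
qed

definition jump_speed :: "nat \<Rightarrow> real" where "jump_speed i = Inf {\<xi>. i \<le> hull_index \<xi>}"

lemma jump_speed_le_iff:
  assumes "1 \<le> i" "i \<le> n"
  shows "jump_speed i \<le> \<xi> \<longleftrightarrow> i \<le> hull_index \<xi>"
proof -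
  define S where "S = {\<xi>. i \<le> hull_index \<xi>}"
  have speed: "jump_speed i = Inf S" unfolding jump_speed_def S_def ..
  obtain \<xi>0 where "hull_index \<xi>0 = n" using eventually_hull_index_n
    by (auto simp: eventually_at_top_linorder)
  then have ne: "S \<noteq> {}" using assms unfolding S_def by (metis empty_iff mem_Collect_eq)
  obtain L where L: "\<And>\<xi>. \<xi> \<le> L \<Longrightarrow> hull_index \<xi> = 0"
    using eventually_hull_index_0 by (auto simp: eventually_at_bot_linorder)
  have "L < s" if "s \<in> S" for s
  proof (rule ccontr)
    assume "\<not> L < s"
    then have "hull_index s = 0" by (intro L) simp
    then show False using that assms unfolding S_def by simp
  qed
  then have bdd: "bdd_below S" by (meson bdd_belowI less_imp_le)
  have "jump_speed i \<in> S"
  proof (rule ccontr)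
    assume nS: "jump_speed i \<notin> S"
    obtain b where b: "jump_speed i < b"
        "\<And>y. jump_speed i < y \<Longrightarrow> y < b \<Longrightarrow> hull_index y = hull_index (jump_speed i)"
      using hull_index_right_constant[of "jump_speed i"] unfolding eventually_at_right_field by auto
    then obtain s where s: "s \<in> S" "s < b" using cInf_less_iff[OF ne bdd] unfolding speed by auto
    have "jump_speed i \<le> s" unfolding speed using s(1) bdd by (rule cInf_lower)
    moreover have "s \<noteq> jump_speed i" using s(1) nS by auto
    ultimately have "hull_index s = hull_index (jump_speed i)" using b(2) s(2) by simp
    then show False using s(1) nS unfolding S_def by simp
  qed
  show ?thesis
  proof
    assume "jump_speed i \<le> \<xi>"
    then have "hull_index (jump_speed i) \<le> hull_index \<xi>" by (rule hull_index_mono)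
    then show "i \<le> hull_index \<xi>" using \<open>jump_speed i \<in> S\<close> unfolding S_def by simp
  next
    assume "i \<le> hull_index \<xi>"
    then have "\<xi> \<in> S" unfolding S_def by simp
    then show "jump_speed i \<le> \<xi>" unfolding speed using bdd by (rule cInf_lower)
  qed
qed

lemma hull_index_left_limit:
  "\<exists>x1 p. x1 < t \<and> (\<forall>\<xi>. x1 < \<xi> \<and> \<xi> < t \<longrightarrow> hull_index \<xi> = p) \<and> (\<forall>\<xi>. \<xi> < t \<longrightarrow> hull_index \<xi> \<le> p)"
proof -
  define P where "P = hull_index ` {..<t}"
  have "P \<subseteq> {..n}" unfolding P_def using hull_index_le by auto
  then have fin: "finite P" by (rule finite_subset) simp
  have "hull_index (t - 1) \<in> P" unfolding P_def by simp
  then have "Max P \<in> P" using fin by (intro Max_in) auto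
  then obtain x1 where x1: "x1 < t" "hull_index x1 = Max P" unfolding P_def by auto
  have le: "hull_index \<xi> \<le> Max P" if "\<xi> < t" for \<xi>
    using fin that unfolding P_def by (intro Max_ge) auto
  have "hull_index \<xi> = Max P" if "x1 < \<xi>" "\<xi> < t" for \<xi>
    using hull_index_mono[of x1 \<xi>] le[of \<xi>] that x1(2) by simp
  then show ?thesis using x1(1) le by (intro exI[of _ x1] exI[of _ "Max P"]) simp
qed

lemma left_limit_index_minimal:
  assumes "x1 < t0" "\<And>\<xi>. x1 < \<xi> \<Longrightarrow> \<xi> < t0 \<Longrightarrow> hull_index \<xi> = p" "j \<le> n"
  shows "tilt t0 p \<le> tilt t0 j"
proof -
  have "((\<lambda>\<xi>. tilt \<xi> p - tilt \<xi> j) \<longlongrightarrow> tilt t0 p - tilt t0 j) (at_left t0)"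
    unfolding tilt_def by (intro tendsto_intros)
  moreover have "eventually (\<lambda>\<xi>. tilt \<xi> p - tilt \<xi> j \<le> 0) (at_left t0)"
    unfolding eventually_at_left_field
    using assms hull_index_minimal[OF assms(3)] by (intro exI[of _ x1]) force
  ultimately have "tilt t0 p - tilt t0 j \<le> 0" by (rule tendsto_upperbound) simp
  then show ?thesis by simp
qed

lemma jump_speed_eq_iff:
  assumes "x1 < t0" "\<And>\<xi>. x1 < \<xi> \<Longrightarrow> \<xi> < t0 \<Longrightarrow> hull_index \<xi> = p"
    "\<And>\<xi>. \<xi> < t0 \<Longrightarrow> hull_index \<xi> \<le> p" and i: "1 \<le> i" "i \<le> n"
  shows "jump_speed i = t0 \<longleftrightarrow> p < i \<and> i \<le> hull_index t0"
proof -
  have "jump_speed i < t0 \<longleftrightarrow> i \<le> p"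
  proof
    assume "jump_speed i < t0"
    moreover have "i \<le> hull_index (jump_speed i)" using jump_speed_le_iff[OF i, of "jump_speed i"]
      by simp
    ultimately show "i \<le> p" using assms(3)[of "jump_speed i"] by linarith
  next
    assume "i \<le> p"
    moreover have "hull_index ((x1 + t0) / 2) = p" using assms(1) by (intro assms(2)) auto
    ultimately have "jump_speed i \<le> (x1 + t0) / 2" using jump_speed_le_iff[OF i, of "(x1 + t0) / 2"]
      by simp
    then show "jump_speed i < t0" using assms(1) by simp
  qed
  then show ?thesis using jump_speed_le_iff[OF i, of t0] by auto
qed

text \<open>All jumps of a common speed \<open>t0\<close> together form a single admissible shock.\<close>

lemma jump_group_entropy_nonneg:
  assumes chord: "\<And>t. k \<in> {uL..uR} \<Longrightarrow> min_tilt t \<le> F - t * k" and "t0 \<in> jump_speed ` {1..n}"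
  shows "0 \<le> (\<Sum>i\<in>{i\<in>{1..n}. jump_speed i = t0}.
      t0 * (\<bar>node i - k\<bar> - \<bar>node (i - 1) - k\<bar>)
      - (sgn (node i - k) * (f (node i) - F) - sgn (node (i - 1) - k) * (f (node (i - 1)) - F)))"
proof -
  obtain x1 p where "x1 < t0" "\<forall>\<xi>. x1 < \<xi> \<and> \<xi> < t0 \<longrightarrow> hull_index \<xi> = p"
      "\<forall>\<xi>. \<xi> < t0 \<longrightarrow> hull_index \<xi> \<le> p"
    using hull_index_left_limit[of t0] by (elim exE conjE)
  then have left: "x1 < t0" "\<And>\<xi>. x1 < \<xi> \<Longrightarrow> \<xi> < t0 \<Longrightarrow> hull_index \<xi> = p"
      "\<And>\<xi>. \<xi> < t0 \<Longrightarrow> hull_index \<xi> \<le> p"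
    by simp_all
  define q where "q = hull_index t0"
  have q: "q \<le> n" unfolding q_def by (rule hull_index_le)
  have group_iff: "jump_speed i = t0 \<longleftrightarrow> p < i \<and> i \<le> q" if "1 \<le> i" "i \<le> n" for i
    unfolding q_def by (rule jump_speed_eq_iff[OF left that])
  have group: "{i\<in>{1..n}. jump_speed i = t0} = {Suc p..q}"
  proof (rule set_eqI)
    fix i show "i \<in> {i\<in>{1..n}. jump_speed i = t0} \<longleftrightarrow> i \<in> {Suc p..q}"
      using group_iff[of i] q by (cases "1 \<le> i \<and> i \<le> n") auto
  qed
  obtain i0 where "i0 \<in> {1..n}" "jump_speed i0 = t0" using assms(2) by blast
  then have "p < q" using group_iff[of i0] by simp
  define g where "g i = t0 * \<bar>node i - k\<bar> - sgn (node i - k) * (f (node i) - F)" for i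
  have "(\<Sum>i\<in>{i\<in>{1..n}. jump_speed i = t0}.
      t0 * (\<bar>node i - k\<bar> - \<bar>node (i - 1) - k\<bar>)
      - (sgn (node i - k) * (f (node i) - F) - sgn (node (i - 1) - k) * (f (node (i - 1)) - F)))
    = (\<Sum>i = Suc p..q. g i - g (i - 1))"
    unfolding group g_def by (simp add: algebra_simps)
  also have "\<dots> = g q - g p" using \<open>p < q\<close> by (intro sum_telescope'') simp
  also have "\<dots> = t0 * (\<bar>node q - k\<bar> - \<bar>node p - k\<bar>)
      - (sgn (node q - k) * (f (node q) - F) - sgn (node p - k) * (f (node p) - F))"
    unfolding g_def by (simp add: algebra_simps)
  also have "0 \<le> \<dots>"
  proof (rule shock_kruzhkov_inequality)
    show "node p < node q" using \<open>p < q\<close> by (rule node_less)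
    show "f (node q) - t0 * node q = min_tilt t0" using hull_index(2)[of t0]
      unfolding q_def tilt_def .
    have "tilt t0 p \<le> min_tilt t0"
      using left_limit_index_minimal[OF left(1,2) q] hull_index(2)[of t0] unfolding q_def by simp
    then show "f (node p) - t0 * node p = min_tilt t0"
      using min_tilt_le[of p t0] \<open>p < q\<close> q unfolding tilt_def by simp
    assume "node p \<le> k" "k \<le> node q"
    then have "k \<in> {uL..uR}" using node_range[of p] node_range[of q] \<open>p < q\<close> q by auto
    then show "min_tilt t0 \<le> F - t0 * k" by (rule chord)
  qed
  finally show ?thesis .
qed

definition fan_profile :: "real \<Rightarrow> real" where "fan_profile \<xi> = node (hull_index \<xi>)"

lemma fan_profile_range: "fan_profile \<xi> \<in> {uL..uR}"
  unfolding fan_profile_def using node_range hull_index_le by auto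

lemma mono_fan_profile: "mono fan_profile"
  unfolding fan_profile_def mono_def using hull_index_mono node_le by blast

lemma fan_profile_continuous_right: "continuous (at_right x) fan_profile"
proof -
  have "eventually (\<lambda>y. fan_profile y = fan_profile x) (at_right x)"
    using hull_index_right_constant[of x] by (rule eventually_mono) (simp add: fan_profile_def)
  then have "(fan_profile \<longlongrightarrow> fan_profile x) (at_right x)" by (rule tendsto_eventually)
  then show ?thesis unfolding continuous_within by simp
qed

lemma fan_profile_eq_uR:
  assumes "\<And>v. v \<in> {uL..uR} \<Longrightarrow> f uR \<le> f v" and "0 \<le> \<xi>"
  shows "fan_profile \<xi> = uR"
proof -
  have "tilt \<xi> n \<le> tilt \<xi> j" if "j \<le> n" for j
    using assms(1)[OF node_range[OF that]] mult_left_mono[OF node_le[OF that] assms(2)]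
    unfolding tilt_def node_n by simp
  then have "n \<le> hull_index \<xi>" by (intro hull_index_greatest) (auto simp: hull_index_le)
  then show ?thesis unfolding fan_profile_def using hull_index_le[of \<xi>] node_n by simp
qed

lemma fan_profile_eq_uL:
  assumes "\<And>v. v \<in> {uL..uR} \<Longrightarrow> f uL \<le> f v" and "\<xi> < 0"
  shows "fan_profile \<xi> = uL"
proof (cases "hull_index \<xi> = 0")
  case False
  then have "f (node 0) \<le> f (node (hull_index \<xi>))" "\<xi> * node (hull_index \<xi>) < \<xi> * node 0"
    using assms node_range[OF hull_index_le] node_less[of 0 "hull_index \<xi>"]
    by (auto simp: node_0 intro: mult_strict_left_mono_neg)
  then have "tilt \<xi> 0 < tilt \<xi> (hull_index \<xi>)" unfolding tilt_def by simp
  then show ?thesis using hull_index_minimal[of 0 \<xi>] by simp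
qed (simp add: fan_profile_def node_0)

lemma node_interpolation:
  assumes "k \<in> {uL..uR}"
  shows "\<exists>i \<theta>. i < n \<and> 0 \<le> \<theta> \<and> \<theta> \<le> 1 \<and> k = (1 - \<theta>) * node i + \<theta> * node (Suc i)"
proof -
  define r where "r = (k - uL) / step"
  have r: "0 \<le> r" "r \<le> n" unfolding r_def using assms step_pos n_pos
    by (auto simp: step_def field_simps)
  define i where "i = min (n - 1) (nat \<lfloor>r\<rfloor>)"
  have "i < n" "real i \<le> r" "r \<le> real i + 1"
    unfolding i_def using n_pos r by (auto simp: min_def) linarith+
  moreover have "k = (1 - (r - i)) * node i + (r - i) * node (Suc i)"
    unfolding r_def node_def using step_pos by (simp add: field_simps)
  ultimately show ?thesis by (intro exI[of _ i] exI[of _ "r - i"]) auto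
qed

definition interp_flux :: "real \<Rightarrow> real" where
  "interp_flux k = (if k \<in> {uL..uR} then
     (SOME F. \<exists>i \<theta>. i < n \<and> 0 \<le> \<theta> \<and> \<theta> \<le> 1 \<and> k = (1 - \<theta>) * node i + \<theta> * node (Suc i)
        \<and> F = (1 - \<theta>) * f (node i) + \<theta> * f (node (Suc i)))
   else f k)"

lemma interp_flux_convex_combination:
  assumes "k \<in> {uL..uR}"
  obtains i \<theta> where "i < n" "0 \<le> \<theta>" "\<theta> \<le> 1" "k = (1 - \<theta>) * node i + \<theta> * node (Suc i)"
    "interp_flux k = (1 - \<theta>) * f (node i) + \<theta> * f (node (Suc i))"
proof -
  from node_interpolation[OF assms] have
    "\<exists>F i \<theta>. i < n \<and> 0 \<le> \<theta> \<and> \<theta> \<le> 1 \<and> k = (1 - \<theta>) * node i + \<theta> * node (Suc i)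
      \<and> F = (1 - \<theta>) * f (node i) + \<theta> * f (node (Suc i))"
    by blast
  from someI_ex[OF this] that show ?thesis unfolding interp_flux_def using assms by auto
qed

lemma interp_flux_above_min_tilt: "k \<in> {uL..uR} \<Longrightarrow> min_tilt t \<le> interp_flux k - t * k"
proof -
  assume "k \<in> {uL..uR}"
  then obtain i \<theta> where i: "i < n" "0 \<le> \<theta>" "\<theta> \<le> 1" "k = (1 - \<theta>) * node i + \<theta> * node (Suc i)"
      "interp_flux k = (1 - \<theta>) * f (node i) + \<theta> * f (node (Suc i))"
    by (rule interp_flux_convex_combination)
  have "min_tilt t = (1 - \<theta>) * min_tilt t + \<theta> * min_tilt t" by (simp add: algebra_simps)
  also have "\<dots> \<le> (1 - \<theta>) * tilt t i + \<theta> * tilt t (Suc i)"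
    using i min_tilt_le[of i t] min_tilt_le[of "Suc i" t] by (intro add_mono mult_left_mono) auto
  also have "\<dots> = interp_flux k - t * k" unfolding i(5) unfolding i(4) tilt_def
    by (simp add: algebra_simps)
  finally show ?thesis .
qed

lemma interp_flux_near:
  assumes "k \<in> {uL..uR}"
  obtains a b \<theta> where "a \<in> {uL..uR}" "b \<in> {uL..uR}" "\<bar>a - k\<bar> \<le> step" "\<bar>b - k\<bar> \<le> step"
    "0 \<le> \<theta>" "\<theta> \<le> 1" "interp_flux k = (1 - \<theta>) * f a + \<theta> * f b"
proof -
  obtain i \<theta> where i: "i < n" "0 \<le> \<theta>" "\<theta> \<le> 1" "k = (1 - \<theta>) * node i + \<theta> * node (Suc i)"
      "interp_flux k = (1 - \<theta>) * f (node i) + \<theta> * f (node (Suc i))"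
    using assms by (rule interp_flux_convex_combination)
  have "k - node i = \<theta> * step" "node (Suc i) - k = (1 - \<theta>) * step"
    using i(4) node_Suc[of i] by (simp_all add: algebra_simps)
  moreover have "\<theta> * step \<le> step" "(1 - \<theta>) * step \<le> step" "0 \<le> \<theta> * step" "0 \<le> (1 - \<theta>) * step"
    using i(2,3) step_pos by (simp_all add: mult_le_cancel_right1)
  ultimately have "\<bar>node i - k\<bar> \<le> step" "\<bar>node (Suc i) - k\<bar> \<le> step" by (simp_all add: abs_le_iff)
  then show ?thesis using that i node_range[of i] node_range[of "Suc i"] by simp
qed

text \<open>The constant \<open>k\<close> enters only through \<open>F\<close>, which need not be \<open>f k\<close>: it only has
  to lie above all supporting lines of the lower convex hull.\<close>

lemma fan_profile_kruzhkov:
  assumes "test_fun phi phit phix" and chord: "\<And>t. k \<in> {uL..uR} \<Longrightarrow> min_tilt t \<le> F - t * k"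
  shows "0 \<le> kruzhkov_functional f (\<lambda>x. if x < 0 then uL else uR) (\<lambda>p. fan_profile (snd p / fst p))
    k F phi phit phix"
proof -
  interpret test_function phi phit phix by unfold_locales (fact assms(1))
  define a where "a i = \<bar>node i - k\<bar>" for i
  define b where "b i = sgn (node i - k) * (f (node i) - F)" for i
  define C where "C i = b i - b (i - 1) - jump_speed i * (a i - a (i - 1))" for i
  define K where "K t = halfplane_integral (\<lambda>(t', x). indicator {t * t'..} x * phix (t', x))" for t
  have "kruzhkov_functional f (\<lambda>x. if x < 0 then uL else uR) (\<lambda>p. fan_profile (snd p / fst p)) k F
      phi phit phix
    = halfplane_integral (\<lambda>p. a (hull_index (snd p / fst p)) * phit p
      + b (hull_index (snd p / fst p)) * phix p)
      + (\<integral>x. (if x < 0 then a 0 else a n) * phi (0, x) \<partial>lborel)"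
    unfolding kruzhkov_functional_def a_def b_def fan_profile_def node_0 node_n
    by (simp add: mult.assoc if_distrib[of "\<lambda>v. \<bar>v - k\<bar>"])
  also have "\<dots> = (\<Sum>i = 1..n. C i * K (jump_speed i))"
    unfolding C_def K_def by (rule halfplane_integral_step_fan[OF hull_index_le jump_speed_le_iff])
  also have "\<dots> = (\<Sum>t0\<in>jump_speed ` {1..n}. \<Sum>i\<in>{i\<in>{1..n}. jump_speed i = t0}. C i
      * K (jump_speed i))"
    by (rule sum.image_gen) simp
  also have "\<dots> = (\<Sum>t0\<in>jump_speed ` {1..n}. K t0 * (\<Sum>i\<in>{i\<in>{1..n}. jump_speed i = t0}. C i))"
  proof (rule sum.cong[OF refl])
    fix t0
    show "(\<Sum>i\<in>{i\<in>{1..n}. jump_speed i = t0}. C i * K (jump_speed i))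
        = K t0 * (\<Sum>i\<in>{i\<in>{1..n}. jump_speed i = t0}. C i)"
      unfolding sum_distrib_left by (rule sum.cong) auto
  qed
  also have "0 \<le> \<dots>"
  proof (rule sum_nonneg)
    fix t0 assume t0: "t0 \<in> jump_speed ` {1..n}"
    have "(\<Sum>i\<in>{i\<in>{1..n}. jump_speed i = t0}. C i)
      = - (\<Sum>i\<in>{i\<in>{1..n}. jump_speed i = t0}. t0 * (\<bar>node i - k\<bar> - \<bar>node (i - 1) - k\<bar>)
          - (sgn (node i - k) * (f (node i) - F) - sgn (node (i - 1) - k)
            * (f (node (i - 1)) - F)))"
      unfolding sum_negf[symmetric] C_def a_def b_def
      by (intro sum.cong refl) (simp add: algebra_simps)
    then have "(\<Sum>i\<in>{i\<in>{1..n}. jump_speed i = t0}. C i) \<le> 0"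
      using jump_group_entropy_nonneg[OF chord t0] by simp
    moreover have "K t0 \<le> 0" unfolding K_def by (rule halfplane_integral_right_of_line_phix_nonpos)
    ultimately show "0 \<le> K t0 * (\<Sum>i\<in>{i\<in>{1..n}. jump_speed i = t0}. C i)"
      by (simp add: mult_nonpos_nonpos)
  qed
  finally show ?thesis .
qed

end

section \<open>The Riemann problem for continuous fluxes\<close>

lemma borel_measurable_ray_ratio: "(\<lambda>p::real \<times> real. snd p / fst p) \<in> borel_measurable borel"
  by (intro borel_measurable_divide borel_measurable_continuous_onI continuous_intros)

lemma AE_isCont_mono_along_rays:
  fixes L :: "real \<Rightarrow> real"
  assumes "mono L"
  shows "AE p in lborel. fst p > 0 \<longrightarrow> isCont L (snd p / fst p)"
proof -
  define D where "D = {a. \<not> isCont L a}"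
  have cD: "countable D" unfolding D_def by (rule mono_ctble_discont[OF assms])
  have "D \<in> sets borel" using null_setsD2[OF countable_imp_null_set_lborel[OF cD]] by simp
  have "{p \<in> space (lborel \<Otimes>\<^sub>M lborel). fst p > 0 \<longrightarrow> isCont L (snd p / fst p)}
      = {p::real \<times> real. fst p \<le> 0} \<union> ((\<lambda>p. snd p / fst p) -` (- D))"
    by (auto simp: D_def space_pair_measure)
  moreover have "{p::real \<times> real. fst p \<le> 0} \<in> sets borel"
    by (intro borel_closed closed_Collect_le) (auto intro!: continuous_intros)
  moreover have "(\<lambda>p::real \<times> real. snd p / fst p) -` (- D) \<in> sets borel"
    using measurable_sets[OF borel_measurable_ray_ratio, of "- D"] \<open>D \<in> sets borel\<close>
    by (simp add: Compl_eq_Diff_UNIV sets.Diff)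
  moreover have "sets (lborel \<Otimes>\<^sub>M lborel) = sets (borel :: (real \<times> real) measure)"
    by (simp only: lborel_prod sets_lborel)
  ultimately have meas: "{p \<in> space (lborel \<Otimes>\<^sub>M lborel). fst p > 0 \<longrightarrow> isCont L (snd p / fst p)}
      \<in> sets (lborel \<Otimes>\<^sub>M lborel)"
    by (metis sets.Un)
  have "AE t in lborel. AE x in lborel. t > 0 \<longrightarrow> isCont L (x / t)"
  proof (rule AE_I2)
    fix t :: real
    have "AE x in lborel. x \<notin> (\<lambda>a. t * a) ` D"
      using cD by (intro AE_not_in countable_imp_null_set_lborel) simp
    then show "AE x in lborel. t > 0 \<longrightarrow> isCont L (x / t)"
      by eventually_elim (auto simp: D_def image_iff)
  qed
  then have "AE p in lborel \<Otimes>\<^sub>M lborel. fst p > 0 \<longrightarrow> isCont L (snd p / fst p)"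
    using lborel_pair.AE_pair_iff[OF meas] by simp
  then show ?thesis by (simp only: lborel_prod)
qed

lemma borel_measurable_mono_along_rays:
  "mono (g :: real \<Rightarrow> real) \<Longrightarrow> (\<lambda>p::real \<times> real. g (snd p / fst p)) \<in> borel_measurable borel"
  using measurable_compose[OF borel_measurable_ray_ratio borel_measurable_mono] by (simp add: o_def)

lemma clamp_real_range: "uL \<le> uR \<Longrightarrow> clamp uL uR (x :: real) \<in> {uL..uR}"
  using clamp_in_interval[of uL uR x] by simp

lemma clamp_real_id: "(x :: real) \<in> {uL..uR} \<Longrightarrow> clamp uL uR x = x"
  by (simp add: clamp_cancel_cbox)

lemma borel_measurable_kruzhkov_integrand:
  fixes f :: "real \<Rightarrow> real" and uL uR :: real
  assumes "continuous_on {uL..uR} f" "v \<in> borel_measurable borel" "\<And>p. v p \<in> {uL..uR}"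
    "phit \<in> borel_measurable borel" "phix \<in> borel_measurable borel"
  shows "(\<lambda>p. \<bar>v p - k\<bar> * phit p + sgn (v p - k) * (f (v p) - c) * phix p) \<in> borel_measurable borel"
proof -
  have "continuous_on UNIV (\<lambda>x. f (clamp uL uR x))"
    using assms(1) by (intro clamp_continuous_on) simp
  then have "(\<lambda>x. f (clamp uL uR x)) \<in> borel_measurable borel"
    by (rule borel_measurable_continuous_onI)
  from measurable_compose[OF assms(2) this] have "(\<lambda>p. f (v p)) \<in> borel_measurable borel"
    using assms(3) by (simp add: clamp_real_id)
  then show ?thesis using assms(2,4,5) by measurable
qed

lemma tendsto_sgn_mult:
  fixes a b :: "nat \<Rightarrow> real"
  assumes "a \<longlonglongrightarrow> a0" "b \<longlonglongrightarrow> b0" "a0 = 0 \<Longrightarrow> b0 = 0"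
  shows "(\<lambda>j. sgn (a j) * b j) \<longlonglongrightarrow> sgn a0 * b0"
proof (cases "a0 = 0")
  case True
  have "(\<lambda>j. sgn (a j) * b j) \<longlonglongrightarrow> 0"
  proof (rule Lim_null_comparison)
    show "eventually (\<lambda>j. norm (sgn (a j) * b j) \<le> \<bar>b j\<bar>) sequentially"
      by (intro always_eventually allI) (simp add: abs_mult abs_sgn_eq)
    show "(\<lambda>j. \<bar>b j\<bar>) \<longlonglongrightarrow> 0" using tendsto_rabs[OF assms(2)] assms(3) True by simp
  qed
  then show ?thesis using True by simp
qed (use assms in \<open>intro tendsto_intros\<close>)

lemma kruzhkov_functional_tendsto:
  assumes tf: "test_fun phi phit phix" and f: "continuous_on {uL..uR} f"
    and v: "\<And>j. v j \<in> borel_measurable borel" "\<And>j p. v j p \<in> {uL..uR}"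
    and w: "w \<in> borel_measurable borel" "\<And>p. w p \<in> {uL..uR}"
    and lim: "AE p in lborel. fst p > 0 \<longrightarrow> (\<lambda>j. v j p) \<longlonglongrightarrow> w p" and c: "c \<longlonglongrightarrow> f k"
  shows "(\<lambda>j. kruzhkov_functional f w0 (v j) k (c j) phi phit phix)
    \<longlonglongrightarrow> kruzhkov_functional f w0 w k (f k) phi phit phix"
proof -
  interpret test_function phi phit phix by unfold_locales (fact tf)
  define A where "A = ({0<..} \<times> UNIV :: (real \<times> real) set)"
  define h where "h j p = \<bar>v j p - k\<bar> * phit p + sgn (v j p - k) * (f (v j p) - c j)
      * phix p" for j p
  define hlim where "hlim p = \<bar>w p - k\<bar> * phit p + sgn (w p - k) * (f (w p) - f k) * phix p" for p
  have mpt: "phit \<in> borel_measurable borel" and mpx: "phix \<in> borel_measurable borel"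
    using bounded_compact_support_phit bounded_compact_support_phix
      unfolding bounded_compact_support_def by auto
  obtain Mf where Mf: "\<forall>v\<in>{uL..uR}. \<bar>f v\<bar> \<le> Mf"
    using compact_imp_bounded[OF compact_continuous_image[OF f compact_Icc]] unfolding bounded_iff
    by auto
  obtain Mc where Mc: "\<And>j. \<bar>c j\<bar> \<le> Mc"
    using convergent_imp_Bseq[OF convergentI[OF c]] unfolding Bseq_def by auto
  define bound where "bound p = indicator A p
      * ((\<bar>uL\<bar> + \<bar>uR\<bar> + \<bar>k\<bar>) * \<bar>phit p\<bar> + (Mf + Mc) * \<bar>phix p\<bar>)" for p
  have "(\<lambda>j. LINT p | lborel. indicator A p *\<^sub>R h j p)
      \<longlonglongrightarrow> (LINT p | lborel. indicator A p *\<^sub>R hlim p)"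
  proof (rule integral_dominated_convergence[where w = bound])
    show "(\<lambda>p. indicator A p *\<^sub>R hlim p) \<in> borel_measurable lborel"
      unfolding hlim_def A_def
      using halfplane_borel borel_measurable_kruzhkov_integrand[OF f w mpt mpx] by simp
    show "(\<lambda>p. indicator A p *\<^sub>R h j p) \<in> borel_measurable lborel" for j
      unfolding h_def A_def
      using halfplane_borel borel_measurable_kruzhkov_integrand[OF f v(1,2) mpt mpx] by simp
    show "integrable lborel bound" unfolding bound_def A_def
      by (intro bounded_compact_support_integrable
        bounded_compact_support_indicator[OF halfplane_borel]
          bounded_compact_support_add bounded_compact_support_cmult bounded_compact_support_abs
          bounded_compact_support_phit bounded_compact_support_phix)
    show "AE p in lborel. norm (indicator A p *\<^sub>R h j p) \<le> bound p" for j
    proof (rule AE_I2)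
      fix p
      have b1: "\<bar>v j p - k\<bar> \<le> \<bar>uL\<bar> + \<bar>uR\<bar> + \<bar>k\<bar>" using v(2)[of j p] by auto
      have "\<bar>f (v j p)\<bar> \<le> Mf" using Mf v(2)[of j p] by blast
      then have b2: "\<bar>sgn (v j p - k) * (f (v j p) - c j)\<bar> \<le> Mf + Mc"
        using Mc[of j] by (simp add: abs_mult abs_sgn_eq) linarith
      have "\<bar>h j p\<bar> \<le> \<bar>\<bar>v j p - k\<bar> * phit p\<bar> + \<bar>sgn (v j p - k) * (f (v j p) - c j) * phix p\<bar>"
        unfolding h_def by (rule abs_triangle_ineq)
      also have "\<dots> = \<bar>v j p - k\<bar> * \<bar>phit p\<bar> + \<bar>sgn (v j p - k) * (f (v j p) - c j)\<bar> * \<bar>phix p\<bar>"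
        by (simp only: abs_mult abs_abs)
      also have "\<dots> \<le> (\<bar>uL\<bar> + \<bar>uR\<bar> + \<bar>k\<bar>) * \<bar>phit p\<bar> + (Mf + Mc) * \<bar>phix p\<bar>"
        using b1 b2 by (intro add_mono mult_right_mono) auto
      finally have "\<bar>h j p\<bar> \<le> (\<bar>uL\<bar> + \<bar>uR\<bar> + \<bar>k\<bar>) * \<bar>phit p\<bar> + (Mf + Mc) * \<bar>phix p\<bar>" .
      then show "norm (indicator A p *\<^sub>R h j p) \<le> bound p" unfolding bound_def
        by (simp add: indicator_def)
    qed
    show "AE p in lborel. (\<lambda>j. indicator A p *\<^sub>R h j p) \<longlonglongrightarrow> indicator A p *\<^sub>R hlim p"
      using lim
    proof eventually_elim
      case (elim p)
      show ?case
      proof (cases "p \<in> A")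
        case True
        then have vw: "(\<lambda>j. v j p) \<longlonglongrightarrow> w p" using elim unfolding A_def by (cases p) auto
        have "(\<lambda>j. f (v j p)) \<longlonglongrightarrow> f (w p)"
          using continuous_on_tendsto_compose[OF f vw w(2)] v(2) by simp
        then have sg: "(\<lambda>j. sgn (v j p - k) * (f (v j p) - c j)) \<longlonglongrightarrow> sgn (w p - k) * (f (w p) - f k)"
          using vw c by (intro tendsto_sgn_mult tendsto_intros) auto
        have "(\<lambda>j. \<bar>v j p - k\<bar> * phit p) \<longlonglongrightarrow> \<bar>w p - k\<bar> * phit p"
          using vw by (intro tendsto_intros)
        from tendsto_add[OF this tendsto_mult_right[OF sg]]
        have "(\<lambda>j. h j p) \<longlonglongrightarrow> hlim p" unfolding h_def hlim_def .
        then show ?thesis using True by simp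
      qed simp
    qed
  qed
  then show ?thesis
    unfolding kruzhkov_functional_def halfplane_integral_def set_lebesgue_integral_def h_def
      hlim_def A_def
    by (intro tendsto_add tendsto_const)
qed

locale riemann_data =
  fixes uL uR :: real and f :: "real \<Rightarrow> real"
  assumes lr: "uL < uR" and continuous: "continuous_on {uL..uR} f"
begin

lemma grid_Suc: "flux_grid uL uR (Suc m)"
  by unfold_locales (use lr in auto)

definition approx_profile :: "nat \<Rightarrow> real \<Rightarrow> real" where
  "approx_profile m = flux_grid.fan_profile uL uR (Suc m) f"

definition approx_flux :: "nat \<Rightarrow> real \<Rightarrow> real" where
  "approx_flux m = flux_grid.interp_flux uL uR (Suc m) f"

lemma approx_profile_range: "approx_profile m \<xi> \<in> {uL..uR}"
  unfolding approx_profile_def by (rule flux_grid.fan_profile_range[OF grid_Suc])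

lemma approx_flux_tendsto: "(\<lambda>m. approx_flux m k) \<longlonglongrightarrow> f k"
proof (cases "k \<in> {uL..uR}")
  case False
  then have "approx_flux m k = f k" for m
    unfolding approx_flux_def flux_grid.interp_flux_def[OF grid_Suc] by auto
  then show ?thesis by simp
next
  case True
  show ?thesis
  proof (rule LIMSEQ_I)
    fix r :: real assume "r > 0"
    then obtain d where d: "d > 0" "\<And>v. v \<in> {uL..uR} \<Longrightarrow> \<bar>v - k\<bar> < d \<Longrightarrow> \<bar>f v - f k\<bar> < r"
      using continuous_on_iff[THEN iffD1, OF continuous, rule_format, OF True]
        unfolding dist_real_def by metis
    obtain N :: nat where N: "(uR - uL) / d < N" using reals_Archimedean2 by blast
    have "norm (approx_flux m k - f k) < r" if "N \<le> m" for m
    proof -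
      interpret flux_grid uL uR "Suc m" f by (rule grid_Suc)
      have "uR - uL < d * N" using N d(1) by (simp add: field_simps)
      also have "\<dots> \<le> d * Suc m" using that d(1) by simp
      finally have "step < d" unfolding step_def using d(1) by (simp add: field_simps)
      obtain a b \<theta> where ab: "a \<in> {uL..uR}" "b \<in> {uL..uR}" "\<bar>a - k\<bar> \<le> step" "\<bar>b - k\<bar> \<le> step"
          "0 \<le> \<theta>" "\<theta> \<le> 1" "interp_flux k = (1 - \<theta>) * f a + \<theta> * f b"
        using True by (rule interp_flux_near)
      have "\<bar>f a - f k\<bar> < r" "\<bar>f b - f k\<bar> < r" using ab \<open>step < d\<close> by (intro d(2); simp)+
      have "\<bar>approx_flux m k - f k\<bar> = \<bar>(1 - \<theta>) * (f a - f k) + \<theta> * (f b - f k)\<bar>"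
        unfolding approx_flux_def ab(7) by (simp add: algebra_simps)
      also have "\<dots> \<le> (1 - \<theta>) * \<bar>f a - f k\<bar> + \<theta> * \<bar>f b - f k\<bar>"
        using ab(5,6) by (auto intro: order_trans[OF abs_triangle_ineq] simp: abs_mult)
      also have "\<dots> < r"
        using \<open>\<bar>f a - f k\<bar> < r\<close> \<open>\<bar>f b - f k\<bar> < r\<close> ab(5,6) by (intro convex_bound_lt) auto
      finally show ?thesis by simp
    qed
    then show "\<exists>N. \<forall>m\<ge>N. norm (approx_flux m k - f k) < r" by blast
  qed
qed

end

text \<open>A Helly limit of the grid solutions along a subsequence \<open>s\<close>; the limit profile \<open>L\<close> is
  only known to lie in \<open>[uL, uR]\<close> at its points of continuity, hence the clamping.\<close>

locale riemann_limit = riemann_data +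
  fixes s :: "nat \<Rightarrow> nat" and L :: "real \<Rightarrow> real"
  assumes strict_mono_s: "strict_mono s" and mono_L: "mono L"
    and profile_tendsto: "\<And>x. isCont L x \<Longrightarrow> (\<lambda>j. approx_profile (s j) x) \<longlonglongrightarrow> L x"
begin

definition limit_solution :: "real \<times> real \<Rightarrow> real" where
  "limit_solution p = clamp uL uR (L (snd p / fst p))"

lemma limit_solution_range: "limit_solution p \<in> {uL..uR}"
  unfolding limit_solution_def using lr by (intro clamp_real_range) simp

lemma borel_measurable_limit_solution: "limit_solution \<in> borel_measurable borel"
proof -
  have "continuous_on UNIV (clamp uL uR :: real \<Rightarrow> real)"
    using clamp_continuous_on[of uL uR "\<lambda>x. x" UNIV] by simp
  from measurable_compose[OF borel_measurable_mono_along_rays[OF mono_L]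
      borel_measurable_continuous_onI[OF this]]
  show ?thesis unfolding limit_solution_def by simp
qed

lemma AE_approx_profile_tendsto:
  "AE p in lborel. fst p > 0 \<longrightarrow> (\<lambda>j. approx_profile (s j) (snd p / fst p)) \<longlonglongrightarrow> limit_solution p"
  using AE_isCont_mono_along_rays[OF mono_L]
proof eventually_elim
  case (elim p)
  show ?case
  proof
    assume "fst p > 0"
    then have lim: "(\<lambda>j. approx_profile (s j) (snd p / fst p)) \<longlonglongrightarrow> L (snd p / fst p)"
      using elim profile_tendsto by blast
    have "L (snd p / fst p) \<in> {uL..uR}"
      using LIMSEQ_le_const[OF lim] LIMSEQ_le_const2[OF lim] approx_profile_range by fastforce
    then show "(\<lambda>j. approx_profile (s j) (snd p / fst p)) \<longlonglongrightarrow> limit_solution p"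
      using lim unfolding limit_solution_def by (simp add: clamp_real_id)
  qed
qed

lemma kruzhkov_limit_solution: "kruzhkov_solution f (\<lambda>x. if x < 0 then uL else uR) limit_solution"
  unfolding kruzhkov_solution_iff
proof (intro conjI allI impI)
  show "limit_solution \<in> borel_measurable lborel" using borel_measurable_limit_solution by simp
  have "\<bar>limit_solution p\<bar> \<le> \<bar>uL\<bar> + \<bar>uR\<bar>" for p
    using limit_solution_range[of p] abs_ge_self[of uR] abs_ge_minus_self[of uL]
    unfolding abs_le_iff by auto
  then show "\<exists>M. \<forall>t x. t > 0 \<longrightarrow> \<bar>limit_solution (t, x)\<bar> \<le> M" by blast
  fix k phi phit phix assume tf: "test_fun phi phit phix"
  let ?w0 = "\<lambda>x. if x < 0 then uL else uR"
  have lim: "(\<lambda>j. kruzhkov_functional f ?w0 (\<lambda>p. approx_profile (s j) (snd p / fst p)) k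
      (approx_flux (s j) k)
      phi phit phix) \<longlonglongrightarrow> kruzhkov_functional f ?w0 limit_solution k (f k) phi phit phix"
  proof (rule kruzhkov_functional_tendsto[OF tf continuous _ _ borel_measurable_limit_solution
        limit_solution_range AE_approx_profile_tendsto])
    show "(\<lambda>p. approx_profile (s j) (snd p / fst p)) \<in> borel_measurable borel" for j
      unfolding approx_profile_def
      by (intro borel_measurable_mono_along_rays flux_grid.mono_fan_profile[OF grid_Suc])
    show "approx_profile (s j) (snd p / fst p) \<in> {uL..uR}" for j p by (rule approx_profile_range)
    show "(\<lambda>j. approx_flux (s j) k) \<longlonglongrightarrow> f k"
      using LIMSEQ_subseq_LIMSEQ[OF approx_flux_tendsto strict_mono_s] by (simp add: o_def)
  qed
  have "0 \<le> kruzhkov_functional f ?w0 (\<lambda>p. approx_profile (s j) (snd p / fst p)) k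
      (approx_flux (s j) k) phi phit phix" for j
    unfolding approx_profile_def approx_flux_def
    by (rule flux_grid.fan_profile_kruzhkov[OF grid_Suc tf
      flux_grid.interp_flux_above_min_tilt[OF grid_Suc]])
  then show "0 \<le> kruzhkov_functional f ?w0 limit_solution k (f k) phi phit phix"
    by (intro LIMSEQ_le_const[OF lim]) simp
qed

lemma limit_solution_eq_uR:
  assumes "\<forall>v\<in>{uL..uR}. f uR \<le> f v"
  shows "AE p in lborel. fst p > 0 \<longrightarrow> snd p > 0 \<longrightarrow> limit_solution p = uR"
  using AE_approx_profile_tendsto
proof eventually_elim
  case (elim p)
  show ?case
  proof (intro impI)
    assume "fst p > 0" "snd p > 0"
    then have "approx_profile (s j) (snd p / fst p) = uR" for j
      unfolding approx_profile_def using assms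
      by (intro flux_grid.fan_profile_eq_uR[OF grid_Suc]) auto
    then show "limit_solution p = uR" using elim \<open>fst p > 0\<close> by (auto intro: LIMSEQ_unique)
  qed
qed

lemma limit_solution_eq_uL:
  assumes "\<forall>v\<in>{uL..uR}. f uL \<le> f v"
  shows "AE p in lborel. fst p > 0 \<longrightarrow> snd p < 0 \<longrightarrow> limit_solution p = uL"
  using AE_approx_profile_tendsto
proof eventually_elim
  case (elim p)
  show ?case
  proof (intro impI)
    assume "fst p > 0" "snd p < 0"
    then have "approx_profile (s j) (snd p / fst p) = uL" for j
      unfolding approx_profile_def using assms
      by (intro flux_grid.fan_profile_eq_uL[OF grid_Suc]) (auto simp: divide_neg_pos)
    then show "limit_solution p = uL" using elim \<open>fst p > 0\<close> by (auto intro: LIMSEQ_unique)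
  qed
qed

end

context riemann_data
begin

theorem riemann_solution_exists:
  "\<exists>w. kruzhkov_solution f (\<lambda>x. if x < 0 then uL else uR) w \<and>
     ((\<forall>v\<in>{uL..uR}. f uR \<le> f v) \<longrightarrow> (AE p in lborel. fst p > 0 \<longrightarrow> snd p > 0 \<longrightarrow> w p = uR)) \<and>
     ((\<forall>v\<in>{uL..uR}. f uL \<le> f v) \<longrightarrow> (AE p in lborel. fst p > 0 \<longrightarrow> snd p < 0 \<longrightarrow> w p = uL))"
proof -
  have "\<bar>approx_profile m x\<bar> \<le> \<bar>uL\<bar> + \<bar>uR\<bar>" for m x
    using approx_profile_range[of m x] by auto
  then obtain s L where "strict_mono s" "mono L" "\<And>x. isCont L x \<Longrightarrow> (\<lambda>j. approx_profile (s j) x)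
      \<longlonglongrightarrow> L x"
    using Helly_selection[of approx_profile] flux_grid.fan_profile_continuous_right[OF grid_Suc]
      flux_grid.mono_fan_profile[OF grid_Suc]
    unfolding approx_profile_def by metis
  then interpret riemann_limit uL uR f s L by unfold_locales
  show ?thesis using kruzhkov_limit_solution limit_solution_eq_uR limit_solution_eq_uL by blast
qed

end

section \<open>Connecting states\<close>

lemma kruzhkov_solution_const: "kruzhkov_solution f (\<lambda>x. c) (\<lambda>p. c)"
  unfolding kruzhkov_solution_iff
proof (intro conjI allI impI)
  fix k phi phit phix assume "test_fun phi phit phix"
  then interpret test_function phi phit phix by unfold_locales
  have "halfplane_integral (\<lambda>p. \<bar>c - k\<bar> * phit p + sgn (c - k) * (f c - f k) * phix p)
      = \<bar>c - k\<bar> * halfplane_integral phit + sgn (c - k) * (f c - f k) * halfplane_integral phix"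
    by (simp add: halfplane_integral_add halfplane_integral_cmult bounded_compact_support_cmult
        bounded_compact_support_phit bounded_compact_support_phix)
  then show "0 \<le> kruzhkov_functional f (\<lambda>x. c) (\<lambda>p. c) k (f k) phi phit phix"
    unfolding kruzhkov_functional_def by (simp add: halfplane_integral_phit halfplane_integral_phix)
qed auto

lemma kruzhkov_solution_reflect:
  assumes "kruzhkov_solution (\<lambda>u. - f (- u)) (\<lambda>x. - w0 x) w"
  shows "kruzhkov_solution f w0 (\<lambda>p. - w p)"
  unfolding kruzhkov_solution_iff
proof (intro conjI allI impI)
  show "(\<lambda>p. - w p) \<in> borel_measurable lborel" using assms unfolding kruzhkov_solution_iff by simp
  show "\<exists>M. \<forall>t x. t > 0 \<longrightarrow> \<bar>- w (t, x)\<bar> \<le> M" using assms unfolding kruzhkov_solution_iff by simp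
  fix k phi phit phix assume "test_fun phi phit phix"
  then have "0 \<le> kruzhkov_functional (\<lambda>u. - f (- u)) (\<lambda>x. - w0 x) w (- k) (- f k) phi phit phix"
    using assms unfolding kruzhkov_solution_iff by (metis minus_minus)
  moreover have "\<bar>w p - - k\<bar> = \<bar>- w p - k\<bar>" "\<bar>- w0 x - - k\<bar> = \<bar>w0 x - k\<bar>"
    "sgn (w p - - k) * (- f (- w p) - - f k) = sgn (- w p - k) * (f (- w p) - f k)" for p x
    by (auto simp: sgn_if algebra_simps)
  ultimately show "0 \<le> kruzhkov_functional f w0 (\<lambda>p. - w p) k (f k) phi phit phix"
    unfolding kruzhkov_functional_def by simp
qed

lemma connects_left_refl: "connects_left f u u"
  unfolding connects_left_def using kruzhkov_solution_const[of f u] by auto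

lemma connects_right_refl: "connects_right f u u"
  unfolding connects_right_def using kruzhkov_solution_const[of f u] by auto

lemma connects_left_if_min:
  assumes "um < ul" "continuous_on {um..ul} f" "\<forall>v\<in>{um..ul}. f ul \<le> f v"
  shows "connects_left f um ul"
proof -
  interpret riemann_data um ul f by unfold_locales (fact assms)+
  show ?thesis unfolding connects_left_def using riemann_solution_exists assms(3) by blast
qed

lemma connects_right_if_min:
  assumes "ur < up" "continuous_on {ur..up} f" "\<forall>v\<in>{ur..up}. f ur \<le> f v"
  shows "connects_right f ur up"
proof -
  interpret riemann_data ur up f by unfold_locales (fact assms)+
  show ?thesis unfolding connects_right_def using riemann_solution_exists assms(3) by blast
qed

lemma riemann_data_reflect:
  assumes "a < b" "continuous_on {a..b} f"
  shows "riemann_data (- b) (- a) (\<lambda>u. - f (- u))"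
proof
  show "continuous_on {- b..- a} (\<lambda>u. - f (- u))"
    by (intro continuous_intros continuous_on_compose2[OF assms(2)]) auto
qed (use assms in simp)

lemma connects_left_if_max:
  assumes "ul < um" "continuous_on {ul..um} f" "\<forall>v\<in>{ul..um}. f v \<le> f ul"
  shows "connects_left f um ul"
proof -
  interpret riemann_data "- um" "- ul" "\<lambda>u. - f (- u)" by (rule riemann_data_reflect[OF assms(1,2)])
  have "\<forall>v\<in>{- um..- ul}. - f (- (- ul)) \<le> - f (- v)" using assms(3) by auto
  then obtain w where w: "kruzhkov_solution (\<lambda>u. - f (- u)) (\<lambda>x. if x < 0 then - um else - ul) w"
      "AE p in lborel. fst p > 0 \<longrightarrow> snd p > 0 \<longrightarrow> w p = - ul"
    using riemann_solution_exists by blast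
  have "kruzhkov_solution f (\<lambda>x. if x < 0 then um else ul) (\<lambda>p. - w p)"
    using w(1) by (intro kruzhkov_solution_reflect) (simp add: if_distrib[of uminus])
  moreover have "AE p in lborel. fst p > 0 \<longrightarrow> snd p > 0 \<longrightarrow> - w p = ul" using w(2) by auto
  ultimately show ?thesis unfolding connects_left_def by blast
qed

lemma connects_right_if_max:
  assumes "up < ur" "continuous_on {up..ur} f" "\<forall>v\<in>{up..ur}. f v \<le> f ur"
  shows "connects_right f ur up"
proof -
  interpret riemann_data "- ur" "- up" "\<lambda>u. - f (- u)" by (rule riemann_data_reflect[OF assms(1,2)])
  have "\<forall>v\<in>{- ur..- up}. - f (- (- ur)) \<le> - f (- v)" using assms(3) by auto
  then obtain w where w: "kruzhkov_solution (\<lambda>u. - f (- u)) (\<lambda>x. if x < 0 then - ur else - up) w"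
      "AE p in lborel. fst p > 0 \<longrightarrow> snd p < 0 \<longrightarrow> w p = - ur"
    using riemann_solution_exists by blast
  have "kruzhkov_solution f (\<lambda>x. if x < 0 then ur else up) (\<lambda>p. - w p)"
    using w(1) by (intro kruzhkov_solution_reflect) (simp add: if_distrib[of uminus])
  moreover have "AE p in lborel. fst p > 0 \<longrightarrow> snd p < 0 \<longrightarrow> - w p = ur" using w(2) by auto
  ultimately show ?thesis unfolding connects_right_def by blast
qed

locale v_shaped_flux =
  fixes f :: "real \<Rightarrow> real" and a :: real
  assumes bij_left: "bij_betw f {..a} {0..}" and antimono_left: "antimono_on {..a} f"
    and bij_right: "bij_betw f {a..} {0..}" and mono_right: "mono_on {a..} f"
begin

lemma decreasing: "x \<le> y \<Longrightarrow> y \<le> a \<Longrightarrow> f y \<le> f x"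
  using monotone_onD[OF antimono_left, of x y] by auto

lemma increasing: "a \<le> x \<Longrightarrow> x \<le> y \<Longrightarrow> f x \<le> f y"
  using mono_onD[OF mono_right, of x y] by auto

lemma image_left: "f ` {..a} = {0..}" and image_right: "f ` {a..} = {0..}"
  using bij_left bij_right by (simp_all add: bij_betw_def)

lemma nonneg: "0 \<le> f v"
  using image_left image_right by (cases "v \<le> a") auto

lemma vertex_value: "f a = 0"
proof -
  have "0 \<in> f ` {a..}" using image_right by simp
  then obtain x where "0 = f x" "a \<le> x" by auto
  then show ?thesis using increasing[of a x] nonneg[of a] by simp
qed

lemma pos_iff: "0 < f v \<longleftrightarrow> v \<noteq> a"
proof
  assume "v \<noteq> a"
  have "inj_on f {..a}" "inj_on f {a..}" using bij_left bij_right by (simp_all add: bij_betw_def)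
  then have "f v \<noteq> f a" using \<open>v \<noteq> a\<close> by (cases "v \<le> a") (auto dest: inj_onD)
  then show "0 < f v" using nonneg[of v] vertex_value by simp
qed (use vertex_value in auto)

lemma left_preimage:
  assumes "0 < c" obtains x where "x < a" "f x = c"
proof -
  have "c \<in> f ` {..a}" using image_left assms by simp
  then obtain x where "c = f x" "x \<le> a" by auto
  moreover have "x \<noteq> a" using \<open>c = f x\<close> assms vertex_value by auto
  ultimately show ?thesis using that[of x] by simp
qed

lemma right_preimage:
  assumes "0 < c" obtains x where "a < x" "f x = c"
proof -
  have "c \<in> f ` {a..}" using image_right assms by simp
  then obtain x where "c = f x" "a \<le> x" by auto
  moreover have "x \<noteq> a" using \<open>c = f x\<close> assms vertex_value by auto
  ultimately show ?thesis using that[of x] by simp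
qed

text \<open>Unfolding the V around the vertex gives a monotone bijection of \<open>\<real>\<close>, hence a continuous one.\<close>

lemma continuous: "continuous_on UNIV f"
proof -
  define h where "h v = (if v \<le> a then - f v else f v)" for v
  have "h ` UNIV = UNIV"
  proof (intro set_eqI iffI)
    fix y :: real
    show "y \<in> range h"
    proof (cases "0 < y")
      case True
      then obtain x where "a < x" "f x = y" by (rule right_preimage)
      then show ?thesis unfolding h_def by (intro image_eqI[of _ _ x]) auto
    next
      case False
      then consider "y = 0" | "0 < - y" by linarith
      then show ?thesis
      proof cases
        case 1 then show ?thesis unfolding h_def using vertex_value
          by (intro image_eqI[of _ _ a]) auto
      next
        case 2
        then obtain x where "x < a" "f x = - y" by (rule left_preimage)
        then show ?thesis unfolding h_def by (intro image_eqI[of _ _ x]) auto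
      qed
    qed
  qed simp
  moreover have "h x \<le> h y" if "x \<le> y" for x y
    using that decreasing[of x y] increasing[of x y] nonneg[of x] nonneg[of y] unfolding h_def
    by auto
  ultimately have "continuous_on UNIV h" by (intro continuous_onI_mono) auto
  moreover have "f = (\<lambda>v. \<bar>h v\<bar>)" using nonneg unfolding h_def by (auto simp: fun_eq_iff)
  ultimately show ?thesis by (simp add: continuous_on_rabs)
qed

lemma connects_left_decreasing_branch:
  assumes "ul \<le> a" and "a < um \<Longrightarrow> f um \<le> f ul"
  shows "connects_left f um ul"
proof -
  consider "um = ul" | "um < ul" | "ul < um" by linarith
  then show ?thesis
  proof cases
    case 2
    then show ?thesis
      using assms(1) decreasing
      by (intro connects_left_if_min continuous_on_subset[OF continuous]) auto
  next
    case 3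
    have "f v \<le> f ul" if "v \<in> {ul..um}" for v
    proof (cases "v \<le> a")
      case False
      then show ?thesis using that assms(2) increasing[of v um] by auto
    qed (use that decreasing in auto)
    with 3 show ?thesis by (intro connects_left_if_max continuous_on_subset[OF continuous]) auto
  qed (simp add: connects_left_refl)
qed

lemma connects_right_increasing_branch:
  assumes "a \<le> ur" and "up < a \<Longrightarrow> f up \<le> f ur"
  shows "connects_right f ur up"
proof -
  consider "ur = up" | "ur < up" | "up < ur" by linarith
  then show ?thesis
  proof cases
    case 2
    then show ?thesis
      using assms(1) increasing
      by (intro connects_right_if_min continuous_on_subset[OF continuous]) auto
  next
    case 3
    have "f v \<le> f ur" if "v \<in> {up..ur}" for v
    proof (cases "a \<le> v")
      case False
      then show ?thesis using that assms(2) decreasing[of up v] by auto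
    qed (use that increasing in auto)
    with 3 show ?thesis by (intro connects_right_if_max continuous_on_subset[OF continuous]) auto
  qed (simp add: connects_right_refl)
qed

end

theorem proposition4p9:
  fixes fl fr :: "real \<Rightarrow> real" and ulo uro :: real
  assumes "bij_betw fl {..ulo} {0..}" and "antimono_on {..ulo} fl"
      and "bij_betw fl {ulo..} {0..}" and "mono_on {ulo..} fl"
      and "bij_betw fr {..uro} {0..}" and "antimono_on {..uro} fr"
      and "bij_betw fr {uro..} {0..}" and "mono_on {uro..} fr"
  shows "complete_germ fl fr {(ul, ur). fl ul = fr ur \<and> sgn (ul - ulo) = sgn (ur - uro)}"
  unfolding complete_germ_def
proof (intro allI)
  interpret l: v_shaped_flux fl ulo using assms(1-4) by unfold_locales
  interpret r: v_shaped_flux fr uro using assms(5-8) by unfold_locales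
  fix um up
  consider (vertex) "um \<le> ulo" "uro \<le> up" | (left) "up < uro" "um \<le> ulo \<or> fl um < fr up"
    | (right) "ulo < um" "uro \<le> up \<or> fr up \<le> fl um" by linarith
  then show "\<exists>(ul, ur)\<in>{(ul, ur). fl ul = fr ur \<and> sgn (ul - ulo) = sgn (ur - uro)}.
      connects_left fl um ul \<and> connects_right fr ur up"
  proof cases
    case vertex
    have "connects_left fl um ulo" by (rule l.connects_left_decreasing_branch) (use vertex in auto)
    moreover have "connects_right fr uro up"
      by (rule r.connects_right_increasing_branch) (use vertex in auto)
    ultimately show ?thesis using l.vertex_value r.vertex_value
      by (intro bexI[of _ "(ulo, uro)"]) auto
  next
    case left
    have "0 < fr up" using left(1) r.pos_iff by simp
    then obtain ul where ul: "ul < ulo" "fl ul = fr up" by (rule l.left_preimage)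
    have "connects_left fl um ul" by (rule l.connects_left_decreasing_branch) (use ul left in auto)
    then show ?thesis using ul left(1) connects_right_refl[of fr up]
      by (intro bexI[of _ "(ul, up)"]) auto
  next
    case right
    have "0 < fl um" using right(1) l.pos_iff by simp
    then obtain ur where ur: "uro < ur" "fr ur = fl um" by (rule r.right_preimage)
    have "connects_right fr ur up"
      by (rule r.connects_right_increasing_branch) (use ur right in auto)
    then show ?thesis using ur right(1) connects_left_refl[of fl um]
      by (intro bexI[of _ "(um, ur)"]) auto
  qed
qed

end
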